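(* In the FuRBI setup below, with $\delta:=-\int_{\mathbb{R}_+^2}\frac{\partial^2\psi_b}{\partial u_1\partial u_2}(u_1,u_2)e^{-\psi_b(u_1,u_2)}\mathrm{d}u_1\mathrm{d}u_2$, for all measurable $C,D\subseteq\mathbb{X}^2$ with $C\cap D=\emptyset$, $$\int_{\mathbb{R}_+^2}\mathbb{E}\Big[e^{-u_1\mu_1(\mathbb{X}^2)-u_2\mu_2(\mathbb{X}^2)}\mu_1(C)\mu_2(D)\Big]\mathrm{d}u_1\mathrm{d}u_2=G_0(C)\,G_0(D)\,(1-\delta).$$
   Context: FuRBI setup. Let $\mathbb{X}$ be a Polish space, $\theta\in(0,\infty)$, and $G_0$ a non-atomic probability measure on $\mathbb{X}^2$ whose two marginals both equal a probability measure $P_0$ on $\mathbb{X}$. Let $\rho$ be a measure on $[0,\infty)^2\setminus\{(0,0)\}$ with $\int\min\{1,s_1+s_2\}\rho(\mathrm{d}s_1,\mathrm{d}s_2)<\infty$, whose two marginal jump measures on $(0,\infty)$, $\rho(\mathrm{d}s\times[0,\infty))$ and $\rho([0,\infty)\times\mathrm{d}s)$, coincide (their common value is denoted $\rho(\mathrm{d}s)$) and have infinite total mass. Let $(\mu_1,\mu_2)$ be a completely random vector on $\mathbb{X}^2$ (a pair of random measures such that for pairwise disjoint measurable $C_1,\dots,C_n$ the vectors $(\mu_1(C_l),\mu_2(C_l))$, $l=1,\dots,n$, are mutually independent), without fixed atoms or deterministic part, with Lévy intensity $\rho(\mathrm{d}s_1,\mathrm{d}s_2)\,\theta G_0(\mathrm{d}x)$,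 i.e. $\mathbb{E}[e^{-\mu_1(f_1)-\mu_2(f_2)}]=\exp\{-\theta\int_{\mathbb{X}^2}\int(1-e^{-s_1f_1(x)-s_2f_2(x)})\rho(\mathrm{d}s_1,\mathrm{d}s_2)G_0(\mathrm{d}x)\}$ for measurable $f_1,f_2\ge0$. Equivalently $\mu_1=\sum_kJ_k\delta_{(\theta_k,\phi_k)}$, $\mu_2=\sum_kW_k\delta_{(\theta_k,\phi_k)}$ with $(\theta_k,\phi_k)\overset{iid}{\sim}G_0$ independent of the jumps. The FuRBI CRMs are $\tilde\mu_1(A)=\mu_1(A\times\mathbb{X})$, $\tilde\mu_2(B)=\mu_2(\mathbb{X}\times B)$; the n-FuRBI are $\tilde p_j=\tilde\mu_j/\tilde\mu_j(\mathbb{X})$, $j=1,2$. Laplace exponents: $\psi_b(\lambda_1,\lambda_2)=\theta\int(1-e^{-\lambda_1s_1-\lambda_2s_2})\rho(\mathrm{d}s_1,\mathrm{d}s_2)$ and $\psi(\lambda)=\psi_b(\lambda,0)=\psi_b(0,\lambda)$. *)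

theory Defs
  imports "HOL-Analysis.Analysis" "HOL-Probability.Probability"
begin

definition enexp :: "ennreal \<Rightarrow> real" where
  "enexp x = (if x = \<infinity> then 0 else exp (- enn2real x))"

definition psi_b :: "(real \<times> real) measure \<Rightarrow> real \<Rightarrow> real \<Rightarrow> real \<Rightarrow> real" where
  "psi_b \<rho> \<theta> l1 l2 = \<theta> * (\<integral>s. (1 - exp (- (l1 * fst s + l2 * snd s))) \<partial>\<rho>)"

definition furbi_delta :: "(real \<times> real) measure \<Rightarrow> real \<Rightarrow> real" where
  "furbi_delta \<rho> \<theta> =
     - (LINT u:{0<..}\<times>{0<..}|lborel.
          deriv (\<lambda>a. deriv (\<lambda>b. psi_b \<rho> \<theta> a b) (snd u)) (fst u)
          * exp (- psi_b \<rho> \<theta> (fst u) (snd u)))"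

definition furbi_levy :: "(real \<times> real) measure \<Rightarrow> bool" where
  "furbi_levy \<rho> \<longleftrightarrow>
     sets \<rho> = sets borel \<and>
     emeasure \<rho> (UNIV - ({0..} \<times> {0..} - {(0,0)})) = 0 \<and>
     (\<integral>\<^sup>+ s. ennreal (min 1 (fst s + snd s)) \<partial>\<rho>) < \<infinity> \<and>
     (\<forall>A \<in> sets (borel :: real measure). A \<subseteq> {0<..} \<longrightarrow>
        emeasure \<rho> (A \<times> {0..}) = emeasure \<rho> ({0..} \<times> A)) \<and>
     emeasure \<rho> ({0<..} \<times> {0..}) = \<infinity>"

definition furbi_base :: "('a::polish_space \<times> 'a) measure \<Rightarrow> bool" where
  "furbi_base G0 \<longleftrightarrow>
     prob_space G0 \<and> sets G0 = sets borel \<and>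
     (\<forall>x. emeasure G0 {x} = 0) \<and>
     distr G0 borel fst = distr G0 borel snd"

text \<open>(mu1, mu2) is a completely random vector on X^2 (random measures defined on the
  probability space M) without fixed atoms or deterministic part, with Levy intensity
  rho(ds1,ds2) theta G0(dx), characterised by its joint Laplace functional.\<close>
definition furbi_crv ::
  "'w measure \<Rightarrow> ('w \<Rightarrow> ('a::polish_space \<times> 'a) measure) \<Rightarrow> ('w \<Rightarrow> ('a \<times> 'a) measure)
    \<Rightarrow> (real \<times> real) measure \<Rightarrow> real \<Rightarrow> ('a \<times> 'a) measure \<Rightarrow> bool" where
  "furbi_crv M \<mu>1 \<mu>2 \<rho> \<theta> G0 \<longleftrightarrow>
     prob_space M \<and>
     (\<forall>\<omega> \<in> space M. sets (\<mu>1 \<omega>) = sets borel \<and> sets (\<mu>2 \<omega>) = sets borel) \<and>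
     (\<forall>C \<in> sets (borel :: ('a \<times> 'a) measure).
        (\<lambda>\<omega>. emeasure (\<mu>1 \<omega>) C) \<in> borel_measurable M \<and>
        (\<lambda>\<omega>. emeasure (\<mu>2 \<omega>) C) \<in> borel_measurable M) \<and>
     (\<forall>f1 f2 :: 'a \<times> 'a \<Rightarrow> real.
        f1 \<in> borel_measurable borel \<longrightarrow> f2 \<in> borel_measurable borel \<longrightarrow>
        (\<forall>x. 0 \<le> f1 x) \<longrightarrow> (\<forall>x. 0 \<le> f2 x) \<longrightarrow>
        (\<integral>\<omega>. enexp ((\<integral>\<^sup>+ x. ennreal (f1 x) \<partial>(\<mu>1 \<omega>)) + (\<integral>\<^sup>+ x. ennreal (f2 x) \<partial>(\<mu>2 \<omega>))) \<partial>M)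
        = enexp (ennreal \<theta> * (\<integral>\<^sup>+ x. (\<integral>\<^sup>+ s.
              ennreal (1 - exp (- (fst s * f1 x + snd s * f2 x))) \<partial>\<rho>) \<partial>G0)))"

end

theory Submission
  imports Defs
begin

text \<open>
  Let \<open>\<kappa>(a, b) = \<integral> (1 - exp (- a s\<^sub>1 - b s\<^sub>2)) \<rho>(ds)\<close>, so that \<open>\<psi>\<^sub>b = \<theta> \<kappa>\<close>.
  Because \<open>C\<close> and \<open>D\<close> are disjoint, the Laplace functional at \<open>u\<^sub>1 + t\<^sub>1 1\<^sub>C\<close> and
  \<open>u\<^sub>2 + t\<^sub>2 1\<^sub>D\<close> is an explicit expression in \<open>\<kappa>\<close>, \<open>G\<^sub>0(C)\<close> and \<open>G\<^sub>0(D)\<close>. Expanding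
  \<open>(1 - exp (- t \<mu>\<^sub>1(C))) (1 - exp (- t \<mu>\<^sub>2(D)))\<close>, dividing by \<open>t\<^sup>2\<close> and letting \<open>t \<rightarrow> 0\<close> by monotone
  convergence shows that the inner expectation is \<open>G\<^sub>0(C) G\<^sub>0(D) \<theta>\<^sup>2 \<partial>\<^sub>1\<kappa> \<partial>\<^sub>2\<kappa> exp (- \<theta> \<kappa>)\<close>.
  Adding \<open>- \<theta> \<partial>\<^sub>1\<partial>\<^sub>2\<kappa> exp (- \<theta> \<kappa>)\<close>, whose integral over the quadrant is \<open>\<delta>\<close>, gives
  \<open>\<partial>\<^sub>1\<partial>\<^sub>2 exp (- \<theta> \<kappa>)\<close>. Its integral over the quadrant is \<open>1\<close>: \<open>exp (- \<theta> \<kappa>)\<close> is \<open>1\<close> at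
  the origin and tends to \<open>0\<close> as either argument tends to infinity, since the marginal jump
  measures have infinite mass.
\<close>

section \<open>Analysis under the integral sign\<close>

lemma integral_dominated_convergence_eventually:
  fixes s :: "nat \<Rightarrow> 'a \<Rightarrow> real" and f w :: "'a \<Rightarrow> real"
  assumes "f \<in> borel_measurable M" "integrable M w"
    and lim: "AE x in M. (\<lambda>i. s i x) \<longlonglongrightarrow> f x"
    and bound: "\<forall>\<^sub>F i in sequentially. s i \<in> borel_measurable M \<and> (AE x in M. norm (s i x) \<le> w x)"
  shows "(\<lambda>i. integral\<^sup>L M (s i)) \<longlonglongrightarrow> integral\<^sup>L M f"
proof -
  from bound obtain N
    where N: "\<And>n. N \<le> n \<Longrightarrow> s n \<in> borel_measurable M \<and> (AE x in M. norm (s n x) \<le> w x)"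
    by (auto simp: eventually_sequentially)
  show ?thesis
  proof (rule LIMSEQ_offset[where k=N], rule integral_dominated_convergence[where w=w])
    show "AE x in M. (\<lambda>n. s (n + N) x) \<longlonglongrightarrow> f x"
      using lim by eventually_elim (rule LIMSEQ_ignore_initial_segment)
  qed (use assms N in auto)
qed

lemma integral_dominated_convergence_within:
  fixes h :: "real \<Rightarrow> 'a \<Rightarrow> real" and h0 w :: "'a \<Rightarrow> real"
  assumes "h0 \<in> borel_measurable M" "integrable M w"
    and lim: "AE s in M. ((\<lambda>y. h y s) \<longlongrightarrow> h0 s) (at x within S)"
    and bound: "\<forall>\<^sub>F y in at x within S. h y \<in> borel_measurable M \<and> (AE s in M. norm (h y s) \<le> w s)"
  shows "((\<lambda>y. integral\<^sup>L M (h y)) \<longlongrightarrow> integral\<^sup>L M h0) (at x within S)"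
  unfolding tendsto_at_iff_sequentially comp_def
proof (intro allI impI)
  fix X :: "nat \<Rightarrow> real"
  assume "\<forall>i. X i \<in> S - {x}" "X \<longlonglongrightarrow> x"
  then have X: "filterlim X (at x within S) sequentially"
    by (auto simp: filterlim_at)
  show "(\<lambda>i. integral\<^sup>L M (h (X i))) \<longlonglongrightarrow> integral\<^sup>L M h0"
  proof (rule integral_dominated_convergence_eventually[where w=w])
    show "AE s in M. (\<lambda>i. h (X i) s) \<longlonglongrightarrow> h0 s"
      using lim by eventually_elim (rule filterlim_compose[OF _ X])
    show "\<forall>\<^sub>F i in sequentially. h (X i) \<in> borel_measurable M \<and> (AE s in M. norm (h (X i) s) \<le> w s)"
      using filterlim_iff[THEN iffD1, OF X, rule_format, OF bound] .
  qed (use assms in auto)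
qed

lemma integral_dominated_convergence_at_right_0:
  fixes h :: "real \<Rightarrow> 'a \<Rightarrow> real" and w :: "'a \<Rightarrow> real"
  assumes meas: "\<And>y. h y \<in> borel_measurable M" and "integrable M w"
    and lim: "AE s in M. ((\<lambda>y. h y s) \<longlongrightarrow> h 0 s) (at_right 0)"
    and bound: "\<And>y. 0 < y \<Longrightarrow> y < 1 \<Longrightarrow> AE s in M. norm (h y s) \<le> w s"
  shows "((\<lambda>y. integral\<^sup>L M (h y)) \<longlongrightarrow> integral\<^sup>L M (h 0)) (at_right 0)"
proof (rule integral_dominated_convergence_within[OF meas assms(2) lim])
  show "\<forall>\<^sub>F y in at_right 0. h y \<in> borel_measurable M \<and> (AE s in M. norm (h y s) \<le> w s)"
    by (rule eventually_at_rightI[of 0 1]) (use assms in auto)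
qed

lemma has_real_derivative_integral:
  fixes f f' :: "real \<Rightarrow> 'a \<Rightarrow> real" and g :: "'a \<Rightarrow> real"
  assumes x0: "l < x0" "x0 < r"
    and int: "integrable M (f x0)"
    and meas: "\<And>x. l < x \<Longrightarrow> x < r \<Longrightarrow> f x \<in> borel_measurable M"
    and meas': "f' x0 \<in> borel_measurable M"
    and der: "AE s in M. \<forall>x. l < x \<and> x < r \<longrightarrow> ((\<lambda>x. f x s) has_real_derivative f' x s) (at x)"
    and bd: "AE s in M. \<forall>x. l < x \<and> x < r \<longrightarrow> \<bar>f' x s\<bar> \<le> g s"
    and g: "integrable M g"
  shows "((\<lambda>x. \<integral>s. f x s \<partial>M) has_real_derivative (\<integral>s. f' x0 s \<partial>M)) (at x0)"
proof -
  have lipschitz: "\<bar>f y s - f x0 s\<bar> \<le> \<bar>y - x0\<bar> * g s"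
    if y: "l < y" "y < r"
      and s: "\<forall>x. l < x \<and> x < r \<longrightarrow> ((\<lambda>x. f x s) has_real_derivative f' x s) (at x)"
        "\<forall>x. l < x \<and> x < r \<longrightarrow> \<bar>f' x s\<bar> \<le> g s" for y s
  proof -
    have "norm (f y s - f x0 s) \<le> g s * norm (y - x0)"
      by (rule field_differentiable_bound[of "{l<..<r}" "\<lambda>x. f x s" "\<lambda>x. f' x s"])
         (use s y x0 in \<open>auto intro: has_field_derivative_at_within\<close>)
    then show ?thesis by (simp add: mult.commute)
  qed
  have ev_in: "\<forall>\<^sub>F y in at x0. y \<in> {l<..<r}"
    using x0 by (intro eventually_at_in_open') auto
  have quotient_bound: "AE s in M. norm ((f y s - f x0 s) / (y - x0)) \<le> g s" if y: "l < y" "y < r" for y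
    using der bd
  proof eventually_elim
    case (elim s)
    have "0 \<le> g s" using elim(2) x0 by (meson abs_ge_zero order_trans)
    then show ?case
      using lipschitz[OF y elim] by (auto simp: divide_le_eq abs_divide mult.commute)
  qed
  have intf: "integrable M (f y)" if y: "l < y" "y < r" for y
  proof (rule Bochner_Integration.integrable_bound[where f="\<lambda>s. \<bar>f x0 s\<bar> + \<bar>y - x0\<bar> * g s"])
    show "AE s in M. norm (f y s) \<le> norm (\<bar>f x0 s\<bar> + \<bar>y - x0\<bar> * g s)"
      using der bd
    proof eventually_elim
      case (elim s)
      have "0 \<le> g s" using elim(2) x0 by (meson abs_ge_zero order_trans)
      then show ?case using lipschitz[OF y elim] by auto
    qed
  qed (use int g meas y in auto)
  have "((\<lambda>y. \<integral>s. (f y s - f x0 s) / (y - x0) \<partial>M) \<longlongrightarrow> (\<integral>s. f' x0 s \<partial>M)) (at x0)"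
  proof (rule integral_dominated_convergence_within[where w=g])
    show "AE s in M. ((\<lambda>y. (f y s - f x0 s) / (y - x0)) \<longlongrightarrow> f' x0 s) (at x0)"
      using der by eventually_elim (use x0 in \<open>auto simp: has_field_derivative_iff\<close>)
    show "\<forall>\<^sub>F y in at x0. (\<lambda>s. (f y s - f x0 s) / (y - x0)) \<in> borel_measurable M \<and>
        (AE s in M. norm ((f y s - f x0 s) / (y - x0)) \<le> g s)"
      using ev_in by eventually_elim (use meas x0 quotient_bound in auto)
  qed (use meas' g in auto)
  moreover have "\<forall>\<^sub>F y in at x0. (\<integral>s. (f y s - f x0 s) / (y - x0) \<partial>M)
      = ((\<integral>s. f y s \<partial>M) - (\<integral>s. f x0 s \<partial>M)) / (y - x0)"
    using ev_in by eventually_elim (use intf int in simp)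
  ultimately show ?thesis
    unfolding has_field_derivative_iff by (rule Lim_transform_eventually)
qed

lemma LIMSEQ_nn_integral_atLeast_inverse:
  fixes f :: "real \<Rightarrow> ennreal"
  assumes [measurable]: "f \<in> borel_measurable borel"
  shows "(\<lambda>n. \<integral>\<^sup>+x. f x * indicator {1 / (real n + 1)..} x \<partial>lborel)
    \<longlonglongrightarrow> (\<integral>\<^sup>+x. f x * indicator {0<..} x \<partial>lborel)"
proof (rule nn_integral_LIMSEQ)
  show "incseq (\<lambda>n x. f x * indicator {1 / (real n + 1)..} x)"
  proof (unfold incseq_def le_fun_def, intro allI impI)
    fix n n' :: nat and x :: real
    assume "n \<le> n'"
    then have "1 / (real n' + 1) \<le> 1 / (real n + 1)" by (simp add: frac_le)
    then show "f x * indicator {1 / (real n + 1)..} x \<le> f x * indicator {1 / (real n' + 1)..} x"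
      by (auto split: split_indicator)
  qed
  show "(\<lambda>n. f x * indicator {1 / (real n + 1)..} x) \<longlonglongrightarrow> f x * indicator {0<..} x" for x
  proof (cases "0 < x")
    case True
    obtain N where N: "1 / x < real N" using reals_Archimedean2 by blast
    have "1 / (real n + 1) \<le> x" if "N \<le> n" for n
    proof -
      have "1 / x < real n + 1" using N that by linarith
      then show ?thesis using True by (simp add: field_simps)
    qed
    then have "\<forall>\<^sub>F n in sequentially. f x * indicator {1 / (real n + 1)..} x = f x * indicator {0<..} x"
      using True by (intro eventually_sequentiallyI[of N]) auto
    then show ?thesis by (rule tendsto_eventually)
  next
    case False
    have "x < 1 / (real n + 1)" for n
    proof -
      have "0 < 1 / (real n + 1)" by simp
      then show ?thesis using False by linarith
    qed
    then show ?thesis using False by (simp add: not_le)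
  qed
qed measurable

lemma nn_integral_FTC_greaterThan:
  fixes f F :: "real \<Rightarrow> real"
  assumes f_borel: "f \<in> borel_measurable borel"
    and der: "\<And>x. 0 < x \<Longrightarrow> (F has_real_derivative f x) (at x)"
    and nonneg: "\<And>x. 0 < x \<Longrightarrow> 0 \<le> f x"
    and lim_top: "(F \<longlongrightarrow> T) at_top"
    and lim_0: "(F \<longlongrightarrow> L) (at_right 0)"
  shows "(\<integral>\<^sup>+x. ennreal (f x) * indicator {0<..} x \<partial>lborel) = ennreal (T - L)"
proof -
  define e where "e n = 1 / (real n + 1)" for n :: nat
  have e_pos: "0 < e n" for n by (simp add: e_def)
  have "(\<integral>\<^sup>+x. ennreal (f x) * indicator {e n..} x \<partial>lborel) = ennreal (T - F (e n))" for n
    by (rule nn_integral_FTC_atLeast[OF f_borel])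
       (use der nonneg e_pos lim_top in \<open>auto intro: less_le_trans\<close>)
  moreover have "filterlim e (at_right 0) sequentially"
    unfolding filterlim_at
  proof
    show "e \<longlonglongrightarrow> 0" unfolding e_def
      using LIMSEQ_inverse_real_of_nat_add[of 0] by (simp add: inverse_eq_divide add.commute)
    show "\<forall>\<^sub>F n in sequentially. e n \<in> {0<..} \<and> e n \<noteq> 0"
      using e_pos by (simp add: less_imp_neq[symmetric])
  qed
  then have "(\<lambda>n. F (e n)) \<longlonglongrightarrow> L" by (rule filterlim_compose[OF lim_0])
  ultimately have "(\<lambda>n. \<integral>\<^sup>+x. ennreal (f x) * indicator {e n..} x \<partial>lborel) \<longlonglongrightarrow> ennreal (T - L)"
    by (auto intro!: tendsto_ennrealI tendsto_intros)
  moreover have "(\<lambda>n. \<integral>\<^sup>+x. ennreal (f x) * indicator {e n..} x \<partial>lborel)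
      \<longlonglongrightarrow> (\<integral>\<^sup>+x. ennreal (f x) * indicator {0<..} x \<partial>lborel)"
    unfolding e_def using f_borel by (intro LIMSEQ_nn_integral_atLeast_inverse) measurable
  ultimately show ?thesis using LIMSEQ_unique by blast
qed

lemma sigma_finite_measure_if_integrable_pos:
  fixes f :: "'a \<Rightarrow> real"
  assumes f: "integrable M f" and pos: "AE x in M. 0 < f x"
  shows "sigma_finite_measure M"
proof
  have [measurable]: "f \<in> borel_measurable M" using f by simp
  define A where "A n = (if n = 0 then {x \<in> space M. f x \<le> 0} else {x \<in> space M. 1 \<le> real n * f x})" for n
  have A_sets: "A n \<in> sets M" for n by (simp add: A_def)
  have "emeasure M (A n) \<noteq> \<infinity>" for n
  proof (cases "n = 0")
    case True
    have "A n \<in> null_sets M"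
      using pos True by (auto simp: A_def AE_iff_measurable[OF _ refl] not_less)
    then show ?thesis by auto
  next
    case False
    have "emeasure M (A n) = emeasure M {x \<in> space M. 1 \<le> ennreal (real n) * ennreal (f x)}"
      using False by (intro arg_cong[where f="emeasure M"]) (auto simp: A_def ennreal_mult'[symmetric])
    also have "\<dots> \<le> ennreal (real n) * (\<integral>\<^sup>+ x. ennreal (f x) \<partial>M)"
      using nn_integral_Markov_inequality[of "\<lambda>x. ennreal (f x)" "space M" M "ennreal (real n)"]
      by simp
    also have "\<dots> \<le> ennreal (real n) * (\<integral>\<^sup>+ x. ennreal (norm (f x)) \<partial>M)"
      by (intro mult_left_mono nn_integral_mono ennreal_leI) auto
    also have "\<dots> < \<infinity>"
      using f by (simp add: integrable_iff_bounded ennreal_mult_less_top)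
    finally show ?thesis by simp
  qed
  moreover have "(\<Union>n. A n) = space M"
  proof safe
    fix x assume x: "x \<in> space M"
    show "x \<in> (\<Union>n. A n)"
    proof (cases "f x \<le> 0")
      case True then show ?thesis using x by (intro UN_I[of 0]) (auto simp: A_def)
    next
      case False
      obtain n where n: "1 / f x < real n" using reals_Archimedean2 by blast
      then have "n \<noteq> 0" using False by (auto simp: not_le intro: ccontr)
      moreover have "1 \<le> real n * f x" using n False by (simp add: field_simps)
      ultimately show ?thesis using x by (intro UN_I[of n]) (auto simp: A_def)
    qed
  qed (auto simp: A_def split: if_splits)
  ultimately show "\<exists>A. countable A \<and> A \<subseteq> sets M \<and> \<Union> A = space M \<and> (\<forall>a\<in>A. emeasure M a \<noteq> \<infinity>)"
    using A_sets by (intro exI[of _ "range A"]) auto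
qed

lemma sets_borel_pair[measurable_cong]:
  "sets (borel :: ('a::second_countable_topology \<times> 'b::second_countable_topology) measure)
    = sets (borel \<Otimes>\<^sub>M borel)"
  by (subst borel_prod) (rule refl)

lemma borel_measurable_slice_fst:
  fixes f :: "real \<Rightarrow> real \<Rightarrow> real"
  assumes "(\<lambda>u. f (fst u) (snd u)) \<in> borel_measurable borel"
  shows "(\<lambda>a. f a b) \<in> borel_measurable borel"
  using measurable_compose[OF measurable_Pair2' assms[folded borel_prod]] by simp

lemma borel_measurable_slice_snd:
  fixes f :: "real \<Rightarrow> real \<Rightarrow> real"
  assumes "(\<lambda>u. f (fst u) (snd u)) \<in> borel_measurable borel"
  shows "(\<lambda>b. f a b) \<in> borel_measurable borel"
  using measurable_compose[OF measurable_Pair1' assms[folded borel_prod]] by simp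

lemma LIMSEQ_nn_integral_one_minus_exp:
  fixes h :: "'a \<Rightarrow> real"
  assumes [measurable]: "h \<in> borel_measurable M"
  shows "(\<lambda>n. \<integral>\<^sup>+x. ennreal (1 - exp (- (real n * h x))) \<partial>M) \<longlonglongrightarrow> emeasure M {x \<in> space M. 0 < h x}"
proof -
  have "(\<lambda>n. \<integral>\<^sup>+x. ennreal (1 - exp (- (real n * h x))) \<partial>M)
      \<longlonglongrightarrow> (\<integral>\<^sup>+x. indicator {x. 0 < h x} x \<partial>M)"
  proof (rule nn_integral_LIMSEQ)
    show "incseq (\<lambda>n x. ennreal (1 - exp (- (real n * h x))))"
    proof (intro incseq_SucI le_funI)
      fix n x
      show "ennreal (1 - exp (- (real n * h x))) \<le> ennreal (1 - exp (- (real (Suc n) * h x)))"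
      proof (cases "0 \<le> h x")
        case True
        then show ?thesis by (intro ennreal_leI) (auto intro: mult_right_mono)
      next
        case False
        then have "1 - exp (- (real n * h x)) \<le> 0" by (simp add: mult_nonneg_nonpos)
        then have "ennreal (1 - exp (- (real n * h x))) = 0" by (rule ennreal_eq_0_iff[THEN iffD2])
        then show ?thesis by simp
      qed
    qed
    show "(\<lambda>n. ennreal (1 - exp (- (real n * h x)))) \<longlonglongrightarrow> indicator {x. 0 < h x} x" for x
    proof (cases "0 < h x")
      case True
      have "filterlim (\<lambda>n. h x * real n) at_top sequentially"
        by (rule filterlim_tendsto_pos_mult_at_top[OF tendsto_const True filterlim_real_sequentially])
      then have "filterlim (\<lambda>n. - (real n * h x)) at_bot sequentially"
        by (simp add: filterlim_uminus_at_top mult.commute)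
      then have "(\<lambda>n. exp (- (real n * h x))) \<longlonglongrightarrow> 0"
        by (rule filterlim_compose[OF exp_at_bot])
      then have "(\<lambda>n. ennreal (1 - exp (- (real n * h x)))) \<longlonglongrightarrow> ennreal (1 - 0)"
        by (intro tendsto_ennrealI tendsto_intros)
      then show ?thesis using True by simp
    next
      case False
      then have "ennreal (1 - exp (- (real n * h x))) = 0" for n
        by (intro ennreal_eq_0_iff[THEN iffD2]) (simp add: not_less mult_nonneg_nonpos)
      then show ?thesis using False by simp
    qed
  qed measurable
  also have "(\<integral>\<^sup>+x. indicator {x. 0 < h x} x \<partial>M) = (\<integral>\<^sup>+x. indicator {x \<in> space M. 0 < h x} x \<partial>M)"
    by (intro nn_integral_cong) (simp split: split_indicator)
  finally show ?thesis by simp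
qed

lemma filterlim_integral_one_minus_exp_at_top:
  fixes h :: "'a \<Rightarrow> real"
  assumes [measurable]: "h \<in> borel_measurable M"
    and nonneg: "AE s in M. 0 \<le> h s"
    and infinite: "emeasure M {s \<in> space M. 0 < h s} = \<infinity>"
    and integrable: "\<And>t. 0 \<le> t \<Longrightarrow> integrable M (\<lambda>s. 1 - exp (- (t * h s)))"
  shows "filterlim (\<lambda>t. \<integral>s. 1 - exp (- (t * h s)) \<partial>M) at_top at_top"
proof -
  define I where "I t = (\<integral>s. 1 - exp (- (t * h s)) \<partial>M)" for t
  have mono: "I t \<le> I t'" if "0 \<le> t" "t \<le> t'" for t t'
    unfolding I_def
  proof (rule integral_mono_AE)
    show "AE s in M. 1 - exp (- (t * h s)) \<le> 1 - exp (- (t' * h s))"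
      using nonneg by eventually_elim (use that in \<open>auto intro: mult_right_mono\<close>)
  qed (use integrable that in auto)
  have "ennreal (I (real n)) = (\<integral>\<^sup>+s. ennreal (1 - exp (- (real n * h s))) \<partial>M)" for n
    unfolding I_def
    by (rule nn_integral_eq_integral[symmetric]) (use integrable nonneg in auto)
  then have "(\<lambda>n. ennreal (I (real n))) \<longlonglongrightarrow> \<infinity>"
    using LIMSEQ_nn_integral_one_minus_exp[of h M] infinite by simp
  then have "filterlim (\<lambda>n. I (real n)) at_top sequentially"
    by (simp add: ennreal_tendsto_top_eq_at_top)
  show ?thesis
    unfolding filterlim_at_top I_def[symmetric]
  proof
    fix B
    obtain n where n: "B \<le> I (real n)"
      using \<open>filterlim (\<lambda>n. I (real n)) at_top sequentially\<close>
      unfolding filterlim_at_top eventually_sequentially by blast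
    show "\<forall>\<^sub>F t in at_top. B \<le> I t"
      using eventually_ge_at_top[of "real n"]
    proof eventually_elim
      case (elim t)
      then show ?case using mono[of "real n" t] n by simp
    qed
  qed
qed

section \<open>Elementary estimates and difference quotients\<close>

lemma one_minus_exp_neg_le_min: "0 \<le> x \<Longrightarrow> 1 - exp (- x) \<le> min 1 (x::real)"
  using exp_ge_add_one_self[of "-x"] by (auto simp: min_def)

lemma min_one_mult_le:
  fixes y c :: real
  assumes "0 \<le> y" "0 \<le> c"
  shows "min 1 (c * y) \<le> max 1 c * min 1 y"
proof (cases "y \<le> 1")
  case True
  have "min 1 (c * y) \<le> max 1 c * y" using assms by (intro min.coboundedI2 mult_right_mono) auto
  then show ?thesis using True by (simp add: min_def)
next
  case False
  have "min 1 (c * y) \<le> max 1 c" by (simp add: min_le_iff_disj)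
  then show ?thesis using False by (simp add: min_def)
qed

lemma mult_exp_neg_mult_le:
  fixes y c :: real
  assumes "0 < c" "0 \<le> y"
  shows "y * exp (- (c * y)) \<le> 1 / c"
proof -
  have "c * y \<le> exp (c * y)" using exp_ge_add_one_self[of "c * y"] by linarith
  then show ?thesis using assms by (simp add: exp_minus field_simps)
qed

lemma mult_exp_neg_le_min:
  fixes x y c :: real
  assumes "0 < c" "0 \<le> y" "c * y \<le> x"
  shows "y * exp (- x) \<le> max 1 (1 / c) * min 1 y"
proof -
  have le_exp_cy: "y * exp (- x) \<le> y * exp (- (c * y))"
    using assms by (intro mult_left_mono) auto
  show ?thesis
  proof (cases "y \<le> 1")
    case True
    have "y * exp (- (c * y)) \<le> y" using assms by (simp add: mult_left_le)
    also have "\<dots> \<le> max 1 (1 / c) * y"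
      using mult_right_mono[OF max.cobounded1[of 1 "1 / c"] assms(2)] by simp
    finally show ?thesis using le_exp_cy True by (simp add: min_def)
  next
    case False
    have "y * exp (- x) \<le> 1 / c"
      using le_exp_cy mult_exp_neg_mult_le[OF assms(1,2)] by linarith
    then show ?thesis using False by (simp add: min_def)
  qed
qed

lemma abs_one_minus_exp_neg_le: "0 \<le> x \<Longrightarrow> x \<le> y \<Longrightarrow> \<bar>1 - exp (- x)\<bar> \<le> 1 - exp (- (y::real))"
  by simp

lemma borel_measurable_enexp[measurable]: "enexp \<in> borel_measurable borel"
  unfolding enexp_def[abs_def] by measurable

lemma enexp_0[simp]: "enexp 0 = 1"
  by (simp add: enexp_def)

lemma enexp_top[simp]: "enexp \<top> = 0"
  by (simp add: enexp_def)

lemma enexp_ennreal: "0 \<le> x \<Longrightarrow> enexp (ennreal x) = exp (- x)"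
  by (simp add: enexp_def)

lemma enexp_nonneg: "0 \<le> enexp x"
  by (simp add: enexp_def)

lemma enexp_le_1: "enexp x \<le> 1"
  by (simp add: enexp_def)

lemma enexp_add: "enexp (x + y) = enexp x * enexp y"
proof (cases x rule: ennreal_cases)
  case (real a)
  then show ?thesis
  proof (cases y rule: ennreal_cases)
    case (real b)
    then show ?thesis using \<open>x = ennreal a\<close> \<open>0 \<le> a\<close>
      by (simp add: enexp_ennreal ennreal_plus[symmetric] exp_add[symmetric] del: ennreal_plus)
  qed simp
qed simp

definition dyadic :: "nat \<Rightarrow> real" where
  "dyadic n = inverse (2 ^ n)"

lemma dyadic_pos: "0 < dyadic n"
  by (simp add: dyadic_def)

lemma LIMSEQ_difference_quotient_dyadic:
  assumes "(F has_real_derivative D) (at 0)" "F 0 = 0"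
  shows "(\<lambda>n. F (dyadic n) / dyadic n) \<longlonglongrightarrow> D"
proof -
  have "filterlim dyadic (at 0) sequentially"
    unfolding filterlim_at dyadic_def
    by (auto intro: LIMSEQ_inverse_realpow_zero)
  moreover have "((\<lambda>y. (F y - F 0) / (y - 0)) \<longlongrightarrow> D) (at 0)"
    using assms(1) by (simp add: has_field_derivative_iff)
  ultimately have "(\<lambda>n. (F (dyadic n) - F 0) / (dyadic n - 0)) \<longlonglongrightarrow> D"
    by (rule filterlim_compose[rotated])
  then show ?thesis using assms(2) by simp
qed

text \<open>Since \<open>enexp_quotient n c\<close> increases to \<open>c\<close> also for \<open>c = \<infinity>\<close>, monotone convergence
  recovers the factors \<open>\<mu>\<^sub>1(C)\<close> and \<open>\<mu>\<^sub>2(D)\<close> from Laplace transforms.\<close>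
definition enexp_quotient :: "nat \<Rightarrow> ennreal \<Rightarrow> real" where
  "enexp_quotient n c = (1 - enexp (ennreal (dyadic n) * c)) / dyadic n"

lemma enexp_quotient_nonneg: "0 \<le> enexp_quotient n c"
  unfolding enexp_quotient_def using enexp_le_1 dyadic_pos by (simp add: divide_nonneg_pos)

lemma enexp_quotient_le: "enexp_quotient n c \<le> 1 / dyadic n"
  unfolding enexp_quotient_def using dyadic_pos[of n] enexp_nonneg by (intro divide_right_mono) auto

lemma enexp_quotient_0[simp]: "enexp_quotient n 0 = 0"
  by (simp add: enexp_quotient_def)

lemma enexp_quotient_top: "enexp_quotient n \<top> = 2 ^ n"
  using dyadic_pos[of n]
  by (simp add: enexp_quotient_def ennreal_mult_top enexp_def dyadic_def divide_inverse)

lemma enexp_quotient_ennreal: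
  "0 \<le> x \<Longrightarrow> enexp_quotient n (ennreal x) = (1 - exp (- (dyadic n * x))) / dyadic n"
  using dyadic_pos[of n] by (simp add: enexp_quotient_def ennreal_mult'[symmetric] enexp_ennreal)

lemma incseq_enexp_quotient: "incseq (\<lambda>n. enexp_quotient n c)"
proof (cases c rule: ennreal_cases)
  case top
  then show ?thesis by (auto simp: enexp_quotient_top incseq_def intro: power_increasing)
next
  case (real x)
  show ?thesis
  proof (rule incseq_SucI)
    fix n
    define t where "t = dyadic (Suc n)"
    have t: "0 < t" using dyadic_pos by (simp add: t_def)
    have dyadic_n: "dyadic n = 2 * t" by (simp add: t_def dyadic_def)
    define y where "y = t * x"
    have y: "0 \<le> y" using t real by (simp add: y_def)
    have "1 - exp (- (2 * y)) = (1 - exp (- y)) * (1 + exp (- y))"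
      by (simp add: algebra_simps exp_add[symmetric])
    also have "\<dots> \<le> (1 - exp (- y)) * 2" using y by (intro mult_left_mono) auto
    finally have "(1 - exp (- (2 * y))) / (2 * t) \<le> ((1 - exp (- y)) * 2) / (2 * t)"
      using t by (intro divide_right_mono) auto
    also have "\<dots> = (1 - exp (- y)) / t"
      using t by (simp add: field_simps)
    finally have "(1 - exp (- (2 * y))) / (2 * t) \<le> (1 - exp (- y)) / t" .
    then show "enexp_quotient n c \<le> enexp_quotient (Suc n) c"
      using real by (simp add: enexp_quotient_ennreal dyadic_n y_def t_def[symmetric] mult.assoc)
  qed
qed

lemma LIMSEQ_enexp_quotient: "(\<lambda>n. ennreal (enexp_quotient n c)) \<longlonglongrightarrow> c"
proof (cases c rule: ennreal_cases)
  case top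
  have "filterlim (\<lambda>n. norm ((2::real) ^ n)) at_top sequentially"
    by (rule filterlim_at_infinity_imp_norm_at_top[OF filterlim_realpow_sequentially_gt1]) simp
  then have "filterlim (\<lambda>n. (2::real) ^ n) at_top sequentially" by simp
  then show ?thesis using top by (simp add: enexp_quotient_top ennreal_tendsto_top_eq_at_top)
next
  case (real x)
  have "((\<lambda>t. 1 - exp (- (t * x))) has_real_derivative x) (at 0)"
    by (auto intro!: derivative_eq_intros)
  from LIMSEQ_difference_quotient_dyadic[OF this]
  have "(\<lambda>n. enexp_quotient n c) \<longlonglongrightarrow> x"
    using real by (simp add: enexp_quotient_ennreal mult.commute)
  then show ?thesis using real by (simp add: tendsto_ennrealI)
qed

lemma incseq_enexp_quotient_product:
  assumes "0 \<le> E"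
  shows "incseq (\<lambda>n. ennreal (E * enexp_quotient n c * enexp_quotient n d))"
proof (rule incseq_SucI, rule ennreal_leI)
  fix n
  show "E * enexp_quotient n c * enexp_quotient n d
      \<le> E * enexp_quotient (Suc n) c * enexp_quotient (Suc n) d"
    using assms enexp_quotient_nonneg incseq_enexp_quotient[of c] incseq_enexp_quotient[of d]
    by (intro mult_mono mult_left_mono) (auto simp: incseq_Suc_iff)
qed

lemma LIMSEQ_enexp_quotient_product:
  assumes E: "0 \<le> E"
  shows "(\<lambda>n. ennreal (E * enexp_quotient n c * enexp_quotient n d)) \<longlonglongrightarrow> ennreal E * c * d"
proof (cases "E = 0 \<or> c = 0 \<or> d = 0")
  case True
  then have "ennreal (E * enexp_quotient n c * enexp_quotient n d) = ennreal E * c * d" for n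
    by (elim disjE) simp_all
  then show ?thesis by simp
next
  case False
  have "(\<lambda>n. ennreal E * ennreal (enexp_quotient n c) * ennreal (enexp_quotient n d))
      \<longlonglongrightarrow> ennreal E * c * d"
    using False E
    by (intro tendsto_mult_ennreal tendsto_const LIMSEQ_enexp_quotient)
       (auto simp: ennreal_mult_eq_top_iff ennreal_eq_0_iff)
  then show ?thesis using E enexp_quotient_nonneg by (simp add: ennreal_mult)
qed

section \<open>The Levy intensity\<close>

definition levy_weight :: "real \<times> real \<Rightarrow> real" where
  "levy_weight s = min 1 (fst s + snd s)"

lemma borel_measurable_levy_weight[measurable]: "levy_weight \<in> borel_measurable borel"
  unfolding levy_weight_def by measurable

lemma abs_one_minus_exp_le_levy_weight:
  assumes "0 \<le> fst s" "0 \<le> snd s" "0 \<le> a" "0 \<le> b"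
  shows "\<bar>1 - exp (- (a * fst s + b * snd s))\<bar> \<le> max 1 (max a b) * levy_weight s"
proof -
  let ?x = "a * fst s + b * snd s"
  have x: "0 \<le> ?x" "?x \<le> max a b * (fst s + snd s)"
    using assms mult_right_mono[of a "max a b" "fst s"] mult_right_mono[of b "max a b" "snd s"]
    by (auto simp: distrib_left)
  then have "\<bar>1 - exp (- ?x)\<bar> = 1 - exp (- ?x)" by simp
  also have "\<dots> \<le> min 1 ?x" by (rule one_minus_exp_neg_le_min[OF x(1)])
  also have "\<dots> \<le> min 1 (max a b * (fst s + snd s))"
    using x by simp
  also have "\<dots> \<le> max 1 (max a b) * levy_weight s"
    unfolding levy_weight_def using assms by (intro min_one_mult_le) auto
  finally show ?thesis .
qed

lemma fst_mult_exp_le_levy_weight: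
  assumes "0 \<le> fst s" "0 \<le> snd s" "0 < c" "c \<le> a" "0 \<le> b"
  shows "\<bar>fst s * exp (- (a * fst s + b * snd s))\<bar> \<le> max 1 (1 / c) * levy_weight s"
proof -
  have "fst s * exp (- (a * fst s + b * snd s)) \<le> max 1 (1 / c) * min 1 (fst s)"
    using assms by (intro mult_exp_neg_le_min) (auto intro: mult_right_mono add_increasing2)
  also have "\<dots> \<le> max 1 (1 / c) * levy_weight s"
    using assms by (intro mult_left_mono) (auto simp: levy_weight_def)
  finally show ?thesis using assms by simp
qed

lemma snd_mult_exp_le_levy_weight:
  assumes "0 \<le> fst s" "0 \<le> snd s" "0 < c" "c \<le> b" "0 \<le> a"
  shows "\<bar>snd s * exp (- (a * fst s + b * snd s))\<bar> \<le> max 1 (1 / c) * levy_weight s"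
proof -
  have "snd s * exp (- (a * fst s + b * snd s)) \<le> max 1 (1 / c) * min 1 (snd s)"
    using assms by (intro mult_exp_neg_le_min) (auto intro: mult_right_mono add_increasing)
  also have "\<dots> \<le> max 1 (1 / c) * levy_weight s"
    using assms by (intro mult_left_mono) (auto simp: levy_weight_def)
  finally show ?thesis using assms by simp
qed

lemma fst_snd_mult_exp_le_levy_weight:
  assumes "0 \<le> fst s" "0 \<le> snd s" "0 < c" "c \<le> a" "0 < d" "d \<le> b"
  shows "\<bar>fst s * snd s * exp (- (a * fst s + b * snd s))\<bar> \<le> max 1 (1 / c) / d * levy_weight s"
proof -
  have "\<bar>fst s * snd s * exp (- (a * fst s + b * snd s))\<bar>
      = (fst s * exp (- (a * fst s + 0 * snd s))) * (snd s * exp (- (b * snd s)))"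
    using assms by (simp add: exp_add[symmetric] algebra_simps)
  also have "\<dots> \<le> (max 1 (1 / c) * levy_weight s) * (1 / d)"
  proof (rule mult_mono)
    have "snd s * exp (- (b * snd s)) \<le> snd s * exp (- (d * snd s))"
      using assms by (intro mult_left_mono) (auto intro: mult_right_mono)
    also have "\<dots> \<le> 1 / d" using mult_exp_neg_mult_le assms by simp
    finally show "snd s * exp (- (b * snd s)) \<le> 1 / d" .
  qed (use fst_mult_exp_le_levy_weight[of s c a 0] assms in \<open>auto simp: levy_weight_def\<close>)
  finally show ?thesis by simp
qed

locale furbi_levy_measure =
  fixes \<rho> :: "(real \<times> real) measure"
  assumes furbi_levy: "furbi_levy \<rho>"
begin

lemma sets_rho[measurable_cong]: "sets \<rho> = sets borel"
  using furbi_levy by (simp add: furbi_levy_def)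

lemma space_rho[simp]: "space \<rho> = UNIV"
  using sets_eq_imp_space_eq[OF sets_rho] by simp

lemma AE_levy_support: "AE s in \<rho>. 0 \<le> fst s \<and> 0 \<le> snd s \<and> s \<noteq> (0, 0)"
proof (rule AE_I')
  have "{0::real..} \<times> {0::real..} \<in> sets borel"
    using closed_Times[OF closed_atLeast closed_atLeast] by (rule borel_closed)
  then show "UNIV - ({0..} \<times> {0..} - {(0::real, 0::real)}) \<in> null_sets \<rho>"
    using furbi_levy by (auto simp: furbi_levy_def null_sets_def sets_rho)
qed (auto simp: mem_Times_iff)

lemma AE_levy_nonneg: "AE s in \<rho>. 0 \<le> fst s \<and> 0 \<le> snd s"
  using AE_levy_support by eventually_elim auto

lemma integrable_levy_weight: "integrable \<rho> levy_weight"
proof (rule integrableI_nonneg)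
  show "AE s in \<rho>. 0 \<le> levy_weight s"
    using AE_levy_nonneg by eventually_elim (auto simp: levy_weight_def)
  show "(\<integral>\<^sup>+ s. ennreal (levy_weight s) \<partial>\<rho>) < \<infinity>"
    using furbi_levy by (simp add: furbi_levy_def levy_weight_def)
qed measurable

lemma integrable_levy_weight_bounded:
  assumes [measurable]: "g \<in> borel_measurable borel"
    and bound: "\<And>s. 0 \<le> fst s \<Longrightarrow> 0 \<le> snd s \<Longrightarrow> \<bar>g s\<bar> \<le> c * levy_weight s"
  shows "integrable \<rho> g"
proof (rule Bochner_Integration.integrable_bound[where f="\<lambda>s. c * levy_weight s"])
  show "AE s in \<rho>. norm (g s) \<le> norm (c * levy_weight s)"
    using AE_levy_nonneg by eventually_elim (use bound in force)
qed (use integrable_levy_weight in auto)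

sublocale sigma_finite_measure \<rho>
proof (rule sigma_finite_measure_if_integrable_pos[OF integrable_levy_weight])
  show "AE s in \<rho>. 0 < levy_weight s"
    using AE_levy_support by eventually_elim (auto simp: levy_weight_def prod_eq_iff)
qed

definition levy_exp :: "real \<Rightarrow> real \<Rightarrow> real" where
  "levy_exp a b = (\<integral>s. 1 - exp (- (a * fst s + b * snd s)) \<partial>\<rho>)"

definition levy_exp_da :: "real \<Rightarrow> real \<Rightarrow> real" where
  "levy_exp_da a b = (\<integral>s. fst s * exp (- (a * fst s + b * snd s)) \<partial>\<rho>)"

definition levy_exp_db :: "real \<Rightarrow> real \<Rightarrow> real" where
  "levy_exp_db a b = (\<integral>s. snd s * exp (- (a * fst s + b * snd s)) \<partial>\<rho>)"

definition levy_exp_mixed :: "real \<Rightarrow> real \<Rightarrow> real" where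
  "levy_exp_mixed a b = (\<integral>s. fst s * snd s * exp (- (a * fst s + b * snd s)) \<partial>\<rho>)"

lemma psi_b_eq_levy_exp: "psi_b \<rho> \<theta> a b = \<theta> * levy_exp a b"
  by (simp add: psi_b_def levy_exp_def)

lemma integrable_one_minus_exp:
  "0 \<le> a \<Longrightarrow> 0 \<le> b \<Longrightarrow> integrable \<rho> (\<lambda>s. 1 - exp (- (a * fst s + b * snd s)))"
  by (rule integrable_levy_weight_bounded[where c="max 1 (max a b)"])
     (measurable, rule abs_one_minus_exp_le_levy_weight, auto)

lemma integrable_snd_mult_exp:
  "0 \<le> a \<Longrightarrow> 0 < b \<Longrightarrow> integrable \<rho> (\<lambda>s. snd s * exp (- (a * fst s + b * snd s)))"
  by (rule integrable_levy_weight_bounded[where c="max 1 (1 / b)"])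
     (measurable, rule snd_mult_exp_le_levy_weight, auto)

lemma AE_exponent_nonneg: "0 \<le> a \<Longrightarrow> 0 \<le> b \<Longrightarrow> AE s in \<rho>. 0 \<le> a * fst s + b * snd s"
  using AE_levy_nonneg by eventually_elim simp

lemma levy_exp_nonneg:
  assumes "0 \<le> a" "0 \<le> b"
  shows "0 \<le> levy_exp a b"
  unfolding levy_exp_def
  by (rule integral_nonneg_AE) (use AE_exponent_nonneg[OF assms] in \<open>eventually_elim, use assms in simp\<close>)

lemma levy_exp_da_nonneg: "0 \<le> levy_exp_da a b"
  unfolding levy_exp_da_def
  by (rule integral_nonneg_AE) (use AE_levy_nonneg in \<open>eventually_elim, simp\<close>)

lemma levy_exp_db_nonneg: "0 \<le> levy_exp_db a b"
  unfolding levy_exp_db_def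
  by (rule integral_nonneg_AE) (use AE_levy_nonneg in \<open>eventually_elim, simp\<close>)

lemma levy_exp_mixed_nonneg: "0 \<le> levy_exp_mixed a b"
  unfolding levy_exp_mixed_def
  by (rule integral_nonneg_AE) (use AE_levy_nonneg in \<open>eventually_elim, simp\<close>)

lemma levy_exp_zero_snd_le:
  assumes "0 \<le> a" "0 \<le> b"
  shows "levy_exp a 0 \<le> levy_exp a b"
  unfolding levy_exp_def
proof (rule integral_mono_AE)
  show "AE s in \<rho>. 1 - exp (- (a * fst s + 0 * snd s)) \<le> 1 - exp (- (a * fst s + b * snd s))"
    using AE_levy_nonneg by eventually_elim (use assms in simp)
qed (use integrable_one_minus_exp[of a 0] integrable_one_minus_exp[of a b] assms in auto)

lemma levy_exp_db_le_zero_fst: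
  assumes "0 \<le> a" "0 < b"
  shows "levy_exp_db a b \<le> levy_exp_db 0 b"
  unfolding levy_exp_db_def
proof (rule integral_mono_AE)
  show "AE s in \<rho>. snd s * exp (- (a * fst s + b * snd s)) \<le> snd s * exp (- (0 * fst s + b * snd s))"
    using AE_levy_nonneg by eventually_elim (use assms in \<open>auto intro: mult_left_mono\<close>)
qed (use integrable_snd_mult_exp[of a b] integrable_snd_mult_exp[of 0 b] assms in auto)

lemma has_real_derivative_levy_exp_fst:
  assumes "0 < a0" "0 \<le> b"
  shows "((\<lambda>a. levy_exp a b) has_real_derivative levy_exp_da a0 b) (at a0)"
  unfolding levy_exp_def levy_exp_da_def
proof (rule has_real_derivative_integral[where l="a0 / 2" and r="a0 + 1"
      and g="\<lambda>s. max 1 (2 / a0) * levy_weight s"])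
  show "AE s in \<rho>. \<forall>x. a0 / 2 < x \<and> x < a0 + 1 \<longrightarrow>
      \<bar>fst s * exp (- (x * fst s + b * snd s))\<bar> \<le> max 1 (2 / a0) * levy_weight s"
    using AE_levy_nonneg
    by eventually_elim (use fst_mult_exp_le_levy_weight[of _ "a0 / 2" _ b] assms in auto)
qed (use assms integrable_levy_weight integrable_one_minus_exp[of a0 b]
      in \<open>auto intro!: derivative_eq_intros\<close>)

lemma has_real_derivative_levy_exp_snd:
  assumes "0 \<le> a" "0 < b0"
  shows "((\<lambda>b. levy_exp a b) has_real_derivative levy_exp_db a b0) (at b0)"
  unfolding levy_exp_def levy_exp_db_def
proof (rule has_real_derivative_integral[where l="b0 / 2" and r="b0 + 1"
      and g="\<lambda>s. max 1 (2 / b0) * levy_weight s"])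
  show "AE s in \<rho>. \<forall>x. b0 / 2 < x \<and> x < b0 + 1 \<longrightarrow>
      \<bar>snd s * exp (- (a * fst s + x * snd s))\<bar> \<le> max 1 (2 / b0) * levy_weight s"
    using AE_levy_nonneg
    by eventually_elim (use snd_mult_exp_le_levy_weight[of _ "b0 / 2" _ a] assms in auto)
qed (use assms integrable_levy_weight integrable_one_minus_exp[of a b0]
      in \<open>auto intro!: derivative_eq_intros\<close>)

lemma has_real_derivative_levy_exp_db:
  assumes "0 < a0" "0 < b"
  shows "((\<lambda>a. levy_exp_db a b) has_real_derivative - levy_exp_mixed a0 b) (at a0)"
proof -
  have "((\<lambda>a. levy_exp_db a b) has_real_derivative
      (\<integral>s. - (fst s * snd s * exp (- (a0 * fst s + b * snd s))) \<partial>\<rho>)) (at a0)"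
    unfolding levy_exp_db_def
  proof (rule has_real_derivative_integral[where l="a0 / 2" and r="a0 + 1"
        and g="\<lambda>s. max 1 (2 / a0) / b * levy_weight s"])
    show "AE s in \<rho>. \<forall>x. a0 / 2 < x \<and> x < a0 + 1 \<longrightarrow>
        \<bar>- (fst s * snd s * exp (- (x * fst s + b * snd s)))\<bar> \<le> max 1 (2 / a0) / b * levy_weight s"
      using AE_levy_nonneg
      by eventually_elim (use fst_snd_mult_exp_le_levy_weight[of _ "a0 / 2" _ b b] assms in auto)
  qed (use assms integrable_levy_weight integrable_snd_mult_exp[of a0 b]
        in \<open>auto intro!: derivative_eq_intros\<close>)
  then show ?thesis by (simp add: levy_exp_mixed_def)
qed

lemma tendsto_levy_exp_fst_at_right_0:
  assumes "0 \<le> b"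
  shows "((\<lambda>a. levy_exp a b) \<longlongrightarrow> levy_exp 0 b) (at_right 0)"
  unfolding levy_exp_def
proof (rule integral_dominated_convergence_at_right_0[where w="\<lambda>s. 1 - exp (- (1 * fst s + b * snd s))"])
  show "AE s in \<rho>. norm (1 - exp (- (a * fst s + b * snd s))) \<le> 1 - exp (- (1 * fst s + b * snd s))"
    if "0 < a" "a < 1" for a
    using AE_levy_nonneg
  proof eventually_elim
    case (elim s)
    have "a * fst s \<le> 1 * fst s" using that elim by (intro mult_right_mono) auto
    moreover have "0 \<le> a * fst s + b * snd s" using that elim assms by simp
    ultimately show ?case unfolding real_norm_def by (intro abs_one_minus_exp_neg_le) auto
  qed
  show "AE s in \<rho>. ((\<lambda>a. 1 - exp (- (a * fst s + b * snd s))) \<longlongrightarrow> 1 - exp (- (0 * fst s + b * snd s)))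
      (at_right 0)"
    by (intro AE_I2 tendsto_intros)
qed (use integrable_one_minus_exp[of 1 b] assms in auto)

lemma tendsto_levy_exp_snd_at_right_0: "((\<lambda>b. levy_exp 0 b) \<longlongrightarrow> 0) (at_right 0)"
proof -
  have "((\<lambda>b. levy_exp 0 b) \<longlongrightarrow> levy_exp 0 0) (at_right 0)"
    unfolding levy_exp_def
  proof (rule integral_dominated_convergence_at_right_0[where w="\<lambda>s. 1 - exp (- (0 * fst s + 1 * snd s))"])
    show "AE s in \<rho>. norm (1 - exp (- (0 * fst s + b * snd s))) \<le> 1 - exp (- (0 * fst s + 1 * snd s))"
      if "0 < b" "b < 1" for b
      using AE_levy_nonneg
    proof eventually_elim
      case (elim s)
      have "b * snd s \<le> 1 * snd s" using that elim by (intro mult_right_mono) auto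
      moreover have "0 \<le> 0 * fst s + b * snd s" using that elim by simp
      ultimately show ?case unfolding real_norm_def by (intro abs_one_minus_exp_neg_le) auto
    qed
    show "AE s in \<rho>. ((\<lambda>b. 1 - exp (- (0 * fst s + b * snd s))) \<longlongrightarrow> 1 - exp (- (0 * fst s + 0 * snd s)))
        (at_right 0)"
      by (intro AE_I2 tendsto_intros)
  qed (use integrable_one_minus_exp[of 0 1] in auto)
  then show ?thesis by (simp add: levy_exp_def)
qed

lemma tendsto_levy_exp_db_at_right_0:
  assumes "0 < b"
  shows "((\<lambda>a. levy_exp_db a b) \<longlongrightarrow> levy_exp_db 0 b) (at_right 0)"
  unfolding levy_exp_db_def
proof (rule integral_dominated_convergence_at_right_0[where w="\<lambda>s. snd s * exp (- (0 * fst s + b * snd s))"])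
  show "AE s in \<rho>. norm (snd s * exp (- (a * fst s + b * snd s))) \<le> snd s * exp (- (0 * fst s + b * snd s))"
    if "0 < a" "a < 1" for a
    using AE_levy_nonneg by eventually_elim (use that in \<open>auto intro: mult_left_mono\<close>)
  show "AE s in \<rho>. ((\<lambda>a. snd s * exp (- (a * fst s + b * snd s))) \<longlongrightarrow> snd s * exp (- (0 * fst s + b * snd s)))
      (at_right 0)"
    by (intro AE_I2 tendsto_intros)
qed (use integrable_snd_mult_exp[of 0 b] assms in auto)

lemma filterlim_levy_exp_fst_at_top: "filterlim (\<lambda>a. levy_exp a 0) at_top at_top"
proof -
  have "emeasure \<rho> ({0<..} \<times> {0..}) \<le> emeasure \<rho> {s \<in> space \<rho>. 0 < fst s}"
    by (rule emeasure_mono) (auto simp: sets_rho)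
  then have "emeasure \<rho> {s \<in> space \<rho>. 0 < fst s} = \<infinity>"
    using furbi_levy by (simp add: furbi_levy_def top_unique)
  then have "filterlim (\<lambda>t. \<integral>s. 1 - exp (- (t * fst s)) \<partial>\<rho>) at_top at_top"
    by (intro filterlim_integral_one_minus_exp_at_top)
       (use AE_levy_nonneg integrable_one_minus_exp[of _ 0] in auto)
  then show ?thesis by (simp add: levy_exp_def)
qed

lemma filterlim_levy_exp_snd_at_top: "filterlim (\<lambda>b. levy_exp 0 b) at_top at_top"
proof -
  have "emeasure \<rho> ({0<..} \<times> {0..}) = emeasure \<rho> ({0..} \<times> {0<..})"
    using furbi_levy unfolding furbi_levy_def by (auto dest!: bspec[of _ _ "{0<..}"])
  moreover have "emeasure \<rho> ({0..} \<times> {0<..}) \<le> emeasure \<rho> {s \<in> space \<rho>. 0 < snd s}"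
    by (rule emeasure_mono) (auto simp: sets_rho)
  ultimately have "emeasure \<rho> {s \<in> space \<rho>. 0 < snd s} = \<infinity>"
    using furbi_levy by (simp add: furbi_levy_def top_unique)
  then have "filterlim (\<lambda>t. \<integral>s. 1 - exp (- (t * snd s)) \<partial>\<rho>) at_top at_top"
    by (intro filterlim_integral_one_minus_exp_at_top)
       (use AE_levy_nonneg integrable_one_minus_exp[of 0] in auto)
  then show ?thesis by (simp add: levy_exp_def)
qed

lemma LIMSEQ_dyadic_quotient_levy_exp_fst:
  assumes "0 < a" "0 \<le> b"
  shows "(\<lambda>n. (1 - exp (- (c * (levy_exp (a + dyadic n) b - levy_exp a b)))) / dyadic n)
    \<longlonglongrightarrow> c * levy_exp_da a b"
proof (rule LIMSEQ_difference_quotient_dyadic)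
  have "((\<lambda>t. levy_exp (t + a) b) has_real_derivative levy_exp_da a b) (at 0)"
    using has_real_derivative_levy_exp_fst[OF assms] DERIV_shift[of "\<lambda>a. levy_exp a b" _ 0 a] by simp
  then show "((\<lambda>t. 1 - exp (- (c * (levy_exp (a + t) b - levy_exp a b)))) has_real_derivative
      c * levy_exp_da a b) (at 0)"
    by (auto intro!: derivative_eq_intros simp: add.commute)
qed simp

lemma LIMSEQ_dyadic_quotient_levy_exp_snd:
  assumes "0 \<le> a" "0 < b"
  shows "(\<lambda>n. (1 - exp (- (c * (levy_exp a (b + dyadic n) - levy_exp a b)))) / dyadic n)
    \<longlonglongrightarrow> c * levy_exp_db a b"
proof (rule LIMSEQ_difference_quotient_dyadic)
  have "((\<lambda>t. levy_exp a (t + b)) has_real_derivative levy_exp_db a b) (at 0)"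
    using has_real_derivative_levy_exp_snd[OF assms] DERIV_shift[of "\<lambda>b. levy_exp a b" _ 0 b] by simp
  then show "((\<lambda>t. 1 - exp (- (c * (levy_exp a (b + t) - levy_exp a b)))) has_real_derivative
      c * levy_exp_db a b) (at 0)"
    by (auto intro!: derivative_eq_intros simp: add.commute)
qed simp

lemma nn_integral_one_minus_exp:
  assumes "0 \<le> a" "0 \<le> b"
  shows "(\<integral>\<^sup>+ s. ennreal (1 - exp (- (fst s * a + snd s * b))) \<partial>\<rho>) = ennreal (levy_exp a b)"
  unfolding levy_exp_def
  by (subst nn_integral_eq_integral[symmetric])
     (use integrable_one_minus_exp[OF assms] AE_exponent_nonneg[OF assms]
      in \<open>auto simp: mult.commute elim: AE_mp\<close>)

lemma borel_measurable_levy_exp[measurable]: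
  "(\<lambda>u. levy_exp (fst u) (snd u)) \<in> borel_measurable borel"
  unfolding levy_exp_def by measurable

lemma borel_measurable_levy_exp_da[measurable]:
  "(\<lambda>u. levy_exp_da (fst u) (snd u)) \<in> borel_measurable borel"
  unfolding levy_exp_da_def by measurable

lemma borel_measurable_levy_exp_db[measurable]:
  "(\<lambda>u. levy_exp_db (fst u) (snd u)) \<in> borel_measurable borel"
  unfolding levy_exp_db_def by measurable

lemma borel_measurable_levy_exp_mixed[measurable]:
  "(\<lambda>u. levy_exp_mixed (fst u) (snd u)) \<in> borel_measurable borel"
  unfolding levy_exp_mixed_def by measurable

end

section \<open>The mixed derivative of \<open>exp (- \<psi>\<^sub>b)\<close>\<close>

locale furbi_exponent = furbi_levy_measure +
  fixes \<theta> :: real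
  assumes theta_pos: "0 < \<theta>"
begin

text \<open>\<open>prod_density + delta_density\<close> is the mixed derivative of \<open>exp (- \<psi>\<^sub>b)\<close>.\<close>
definition prod_density :: "real \<Rightarrow> real \<Rightarrow> real" where
  "prod_density a b = \<theta> * levy_exp_da a b * (\<theta> * levy_exp_db a b) * exp (- (\<theta> * levy_exp a b))"

definition delta_density :: "real \<Rightarrow> real \<Rightarrow> real" where
  "delta_density a b = \<theta> * levy_exp_mixed a b * exp (- (\<theta> * levy_exp a b))"

lemma prod_density_nonneg: "0 \<le> prod_density a b"
  unfolding prod_density_def using theta_pos levy_exp_da_nonneg levy_exp_db_nonneg by simp

lemma delta_density_nonneg: "0 \<le> delta_density a b"
  unfolding delta_density_def using theta_pos levy_exp_mixed_nonneg by simp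

lemma borel_measurable_prod_density[measurable]:
  "(\<lambda>u. prod_density (fst u) (snd u)) \<in> borel_measurable borel"
  unfolding prod_density_def by measurable

lemma borel_measurable_delta_density[measurable]:
  "(\<lambda>u. delta_density (fst u) (snd u)) \<in> borel_measurable borel"
  unfolding delta_density_def by measurable

lemma has_real_derivative_minus_db_exp:
  assumes "0 < a" "0 < b"
  shows "((\<lambda>a. - (\<theta> * levy_exp_db a b) * exp (- (\<theta> * levy_exp a b)))
      has_real_derivative prod_density a b + delta_density a b) (at a)"
proof -
  note db = has_real_derivative_levy_exp_db[OF assms]
  note da = has_real_derivative_levy_exp_fst[OF assms(1) less_imp_le[OF assms(2)]]
  show ?thesis
    by (rule DERIV_cong, rule DERIV_mult[OF DERIV_minus[OF DERIV_cmult[OF db]]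
          DERIV_chain2[OF DERIV_exp DERIV_minus[OF DERIV_cmult[OF da]]]])
       (simp add: prod_density_def delta_density_def algebra_simps)
qed

lemma tendsto_exp_minus_levy_exp_fst_at_top: "((\<lambda>a. exp (- (\<theta> * levy_exp a 0))) \<longlongrightarrow> 0) at_top"
proof -
  have "filterlim (\<lambda>a. \<theta> * levy_exp a 0) at_top at_top"
    by (rule filterlim_tendsto_pos_mult_at_top[OF tendsto_const theta_pos filterlim_levy_exp_fst_at_top])
  then have "filterlim (\<lambda>a. - (\<theta> * levy_exp a 0)) at_bot at_top"
    by (simp add: filterlim_uminus_at_top)
  then show ?thesis by (rule filterlim_compose[OF exp_at_bot])
qed

lemma tendsto_exp_minus_levy_exp_snd_at_top: "((\<lambda>b. exp (- (\<theta> * levy_exp 0 b))) \<longlongrightarrow> 0) at_top"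
proof -
  have "filterlim (\<lambda>b. \<theta> * levy_exp 0 b) at_top at_top"
    by (rule filterlim_tendsto_pos_mult_at_top[OF tendsto_const theta_pos filterlim_levy_exp_snd_at_top])
  then have "filterlim (\<lambda>b. - (\<theta> * levy_exp 0 b)) at_bot at_top"
    by (simp add: filterlim_uminus_at_top)
  then show ?thesis by (rule filterlim_compose[OF exp_at_bot])
qed

lemma nn_integral_fst_prod_density_plus_delta_density:
  assumes b: "0 < b"
  shows "(\<integral>\<^sup>+a. ennreal (prod_density a b + delta_density a b) * indicator {0<..} a \<partial>lborel)
    = ennreal (\<theta> * levy_exp_db 0 b * exp (- (\<theta> * levy_exp 0 b)))"
proof -
  define G where "G a = - (\<theta> * levy_exp_db a b) * exp (- (\<theta> * levy_exp a b))" for a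
  have "(\<integral>\<^sup>+a. ennreal (prod_density a b + delta_density a b) * indicator {0<..} a \<partial>lborel)
      = ennreal (0 - G 0)"
  proof (rule nn_integral_FTC_greaterThan)
    show "(\<lambda>a. prod_density a b + delta_density a b) \<in> borel_measurable borel"
      by (rule borel_measurable_slice_fst[where f="\<lambda>a b. prod_density a b + delta_density a b"])
         measurable
    show "(G has_real_derivative prod_density a b + delta_density a b) (at a)" if "0 < a" for a
      unfolding G_def[abs_def] using has_real_derivative_minus_db_exp[OF that b] .
    show "0 \<le> prod_density a b + delta_density a b" for a
      using prod_density_nonneg delta_density_nonneg by (rule add_nonneg_nonneg)
    show "(G \<longlongrightarrow> G 0) (at_right 0)"
      unfolding G_def using tendsto_levy_exp_db_at_right_0[OF b] tendsto_levy_exp_fst_at_right_0[of b] b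
      by (auto intro!: tendsto_intros)
    show "(G \<longlongrightarrow> 0) at_top"
    proof (rule tendsto_sandwich[where f="\<lambda>a. - (\<theta> * levy_exp_db 0 b) * exp (- (\<theta> * levy_exp a 0))"])
      show "\<forall>\<^sub>F a in at_top. - (\<theta> * levy_exp_db 0 b) * exp (- (\<theta> * levy_exp a 0)) \<le> G a"
        using eventually_ge_at_top[of 0]
      proof eventually_elim
        case (elim a)
        have "levy_exp_db a b \<le> levy_exp_db 0 b"
          using levy_exp_db_le_zero_fst elim b by simp
        moreover have "exp (- (\<theta> * levy_exp a b)) \<le> exp (- (\<theta> * levy_exp a 0))"
          using levy_exp_zero_snd_le elim b theta_pos by simp
        ultimately show ?case
          unfolding G_def using theta_pos levy_exp_db_nonneg[of a b] by (simp add: mult_mono)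
      qed
      show "\<forall>\<^sub>F a in at_top. G a \<le> (\<lambda>_. 0) a"
        unfolding G_def using theta_pos levy_exp_db_nonneg by simp
      show "((\<lambda>a. - (\<theta> * levy_exp_db 0 b) * exp (- (\<theta> * levy_exp a 0))) \<longlongrightarrow> 0) at_top"
        using tendsto_mult_right_zero[OF tendsto_exp_minus_levy_exp_fst_at_top,
            of "- (\<theta> * levy_exp_db 0 b)"] by simp
    qed simp
  qed
  then show ?thesis by (simp add: G_def)
qed

lemma nn_integral_snd_db_exp:
  "(\<integral>\<^sup>+b. ennreal (\<theta> * levy_exp_db 0 b * exp (- (\<theta> * levy_exp 0 b))) * indicator {0<..} b \<partial>lborel) = 1"
proof -
  define H where "H b = - exp (- (\<theta> * levy_exp 0 b))" for b
  have "(\<integral>\<^sup>+b. ennreal (\<theta> * levy_exp_db 0 b * exp (- (\<theta> * levy_exp 0 b))) * indicator {0<..} b \<partial>lborel)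
      = ennreal (0 - (- 1))"
  proof (rule nn_integral_FTC_greaterThan)
    show "(\<lambda>b. \<theta> * levy_exp_db 0 b * exp (- (\<theta> * levy_exp 0 b))) \<in> borel_measurable borel"
      by (rule borel_measurable_slice_snd[where
            f="\<lambda>a b. \<theta> * levy_exp_db a b * exp (- (\<theta> * levy_exp a b))"]) measurable
    show "(H has_real_derivative \<theta> * levy_exp_db 0 b * exp (- (\<theta> * levy_exp 0 b))) (at b)"
      if "0 < b" for b
      unfolding H_def
      by (rule DERIV_cong, rule DERIV_minus[OF DERIV_chain2[OF DERIV_exp
            DERIV_minus[OF DERIV_cmult[OF has_real_derivative_levy_exp_snd[OF order_refl that]]]]])
         simp
    show "0 \<le> \<theta> * levy_exp_db 0 b * exp (- (\<theta> * levy_exp 0 b))" for b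
      using theta_pos levy_exp_db_nonneg by simp
    show "(H \<longlongrightarrow> 0) at_top"
      unfolding H_def[abs_def] using tendsto_minus[OF tendsto_exp_minus_levy_exp_snd_at_top] by simp
    show "(H \<longlongrightarrow> - 1) (at_right 0)"
      unfolding H_def using tendsto_levy_exp_snd_at_right_0 by (auto intro!: tendsto_eq_intros)
  qed
  then show ?thesis by simp
qed

lemma nn_integral_prod_density_plus_delta_density:
  "(\<integral>\<^sup>+u. ennreal (prod_density (fst u) (snd u)) * indicator ({0<..} \<times> {0<..}) u \<partial>lborel)
    + (\<integral>\<^sup>+u. ennreal (delta_density (fst u) (snd u) * indicator ({0<..} \<times> {0<..}) u) \<partial>lborel) = 1"
proof -
  let ?f = "\<lambda>u. ennreal (prod_density (fst u) (snd u) + delta_density (fst u) (snd u))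
      * indicator ({0<..} \<times> {0<..}) u"
  have [measurable]: "?f \<in> borel_measurable (lborel \<Otimes>\<^sub>M lborel)"
    unfolding lborel_prod measurable_lborel1 by measurable
  have "(\<integral>\<^sup>+u. ennreal (prod_density (fst u) (snd u)) * indicator ({0<..} \<times> {0<..}) u \<partial>lborel)
      + (\<integral>\<^sup>+u. ennreal (delta_density (fst u) (snd u) * indicator ({0<..} \<times> {0<..}) u) \<partial>lborel)
      = (\<integral>\<^sup>+u. ?f u \<partial>lborel)"
    by (subst nn_integral_add[symmetric])
       (auto simp: measurable_lborel1 prod_density_nonneg delta_density_nonneg ennreal_plus
          split: split_indicator intro!: nn_integral_cong)
  also have "\<dots> = (\<integral>\<^sup>+b. (\<integral>\<^sup>+a. ?f (a, b) \<partial>lborel) \<partial>lborel)"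
    by (simp add: lborel_prod[symmetric] lborel_pair.nn_integral_snd[symmetric])
  also have "\<dots> = (\<integral>\<^sup>+b. ennreal (\<theta> * levy_exp_db 0 b * exp (- (\<theta> * levy_exp 0 b)))
      * indicator {0<..} b \<partial>lborel)"
  proof (rule nn_integral_cong)
    fix b :: real
    have [measurable]: "(\<lambda>a. prod_density a b + delta_density a b) \<in> borel_measurable borel"
      by (rule borel_measurable_slice_fst[where f="\<lambda>a b. prod_density a b + delta_density a b"])
         measurable
    have "(\<integral>\<^sup>+a. ?f (a, b) \<partial>lborel) = (\<integral>\<^sup>+a. ennreal (prod_density a b + delta_density a b)
        * indicator {0<..} a \<partial>lborel) * indicator {0<..} b"
      by (subst nn_integral_multc[symmetric]) (auto intro!: nn_integral_cong split: split_indicator)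
    then show "(\<integral>\<^sup>+a. ?f (a, b) \<partial>lborel) = ennreal (\<theta> * levy_exp_db 0 b * exp (- (\<theta> * levy_exp 0 b)))
        * indicator {0<..} b"
      by (cases "0 < b") (simp_all add: nn_integral_fst_prod_density_plus_delta_density)
  qed
  also have "\<dots> = 1" by (rule nn_integral_snd_db_exp)
  finally show ?thesis .
qed

lemma deriv_deriv_psi_b:
  assumes "0 < a0" "0 < b0"
  shows "deriv (\<lambda>a. deriv (\<lambda>b. psi_b \<rho> \<theta> a b) b0) a0 = - (\<theta> * levy_exp_mixed a0 b0)"
proof -
  have inner: "deriv (\<lambda>b. psi_b \<rho> \<theta> a b) b0 = \<theta> * levy_exp_db a b0" if "0 \<le> a" for a
    unfolding psi_b_eq_levy_exp
    by (rule DERIV_imp_deriv[OF DERIV_cmult[OF has_real_derivative_levy_exp_snd[OF that assms(2)]]])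
  have "((\<lambda>a. \<theta> * levy_exp_db a b0) has_real_derivative \<theta> * - levy_exp_mixed a0 b0) (at a0)"
    by (rule DERIV_cmult[OF has_real_derivative_levy_exp_db[OF assms]])
  then have "((\<lambda>a. deriv (\<lambda>b. psi_b \<rho> \<theta> a b) b0) has_real_derivative \<theta> * - levy_exp_mixed a0 b0) (at a0)"
    by (rule has_field_derivative_transform_within_open[where S="{0<..}"]) (use assms inner in auto)
  then show ?thesis by (simp add: DERIV_imp_deriv)
qed

lemma furbi_delta_eq_integral_delta_density:
  "furbi_delta \<rho> \<theta> = (\<integral>u. delta_density (fst u) (snd u) * indicator ({0<..} \<times> {0<..}) u \<partial>lborel)"
proof -
  have "furbi_delta \<rho> \<theta> = - (\<integral>u. - (delta_density (fst u) (snd u) * indicator ({0<..} \<times> {0<..}) u) \<partial>lborel)"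
    unfolding furbi_delta_def set_lebesgue_integral_def
    by (intro arg_cong[where f=uminus] Bochner_Integration.integral_cong)
       (auto simp: indicator_def deriv_deriv_psi_b psi_b_eq_levy_exp delta_density_def)
  then show ?thesis by simp
qed

lemma nn_integral_delta_density:
  "(\<integral>\<^sup>+u. ennreal (delta_density (fst u) (snd u) * indicator ({0<..} \<times> {0<..}) u) \<partial>lborel)
    = ennreal (furbi_delta \<rho> \<theta>)"
proof -
  let ?Q = "\<lambda>u. delta_density (fst u) (snd u) * indicator ({0<..} \<times> {0<..}) u"
  have "(\<integral>\<^sup>+u. ennreal (?Q u) \<partial>lborel)
      \<le> (\<integral>\<^sup>+u. ennreal (prod_density (fst u) (snd u)) * indicator ({0<..} \<times> {0<..}) u \<partial>lborel)
        + (\<integral>\<^sup>+u. ennreal (?Q u) \<partial>lborel)"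
    by simp
  also have "\<dots> = 1" by (rule nn_integral_prod_density_plus_delta_density)
  finally have "(\<integral>\<^sup>+u. ennreal (?Q u) \<partial>lborel) \<le> 1" .
  then have "integrable lborel ?Q"
    by (intro integrableI_nonneg)
       (auto simp: measurable_lborel1 delta_density_nonneg order_le_less_trans)
  then show ?thesis
    unfolding furbi_delta_eq_integral_delta_density
    by (rule nn_integral_eq_integral) (simp add: delta_density_nonneg)
qed

lemma furbi_delta_nonneg: "0 \<le> furbi_delta \<rho> \<theta>"
  unfolding furbi_delta_eq_integral_delta_density by (simp add: delta_density_nonneg)

lemma furbi_delta_le_1: "furbi_delta \<rho> \<theta> \<le> 1"
proof -
  have "ennreal (furbi_delta \<rho> \<theta>)
      \<le> (\<integral>\<^sup>+u. ennreal (prod_density (fst u) (snd u)) * indicator ({0<..} \<times> {0<..}) u \<partial>lborel)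
        + ennreal (furbi_delta \<rho> \<theta>)"
    by simp
  also have "\<dots> = 1"
    using nn_integral_prod_density_plus_delta_density by (simp add: nn_integral_delta_density)
  finally show ?thesis by simp
qed

lemma nn_integral_prod_density:
  "(\<integral>\<^sup>+u. ennreal (prod_density (fst u) (snd u)) * indicator ({0<..} \<times> {0<..}) u \<partial>lborel)
    = ennreal (1 - furbi_delta \<rho> \<theta>)"
  (is "?IP = _")
proof -
  have "?IP = (?IP + ennreal (furbi_delta \<rho> \<theta>)) - ennreal (furbi_delta \<rho> \<theta>)"
    by (simp add: ennreal_add_diff_cancel_right)
  also have "\<dots> = ennreal 1 - ennreal (furbi_delta \<rho> \<theta>)"
    using nn_integral_prod_density_plus_delta_density by (simp add: nn_integral_delta_density)
  also have "\<dots> = ennreal (1 - furbi_delta \<rho> \<theta>)"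
    using furbi_delta_nonneg by (rule ennreal_minus)
  finally show ?thesis .
qed

end

section \<open>The joint Laplace transform of \<open>(\<mu>\<^sub>1, \<mu>\<^sub>2)\<close>\<close>

lemma nn_integral_const_plus_indicator:
  assumes "X \<in> sets N" "0 \<le> u" "0 \<le> t"
  shows "(\<integral>\<^sup>+x. ennreal (u + t * indicator X x) \<partial>N)
    = ennreal u * emeasure N (space N) + ennreal t * emeasure N X"
proof -
  have "(\<integral>\<^sup>+x. ennreal (u + t * indicator X x) \<partial>N) = (\<integral>\<^sup>+x. ennreal u + ennreal t * indicator X x \<partial>N)"
    by (intro nn_integral_cong) (use assms in \<open>simp add: ennreal_plus split: split_indicator\<close>)
  also have "\<dots> = (\<integral>\<^sup>+x. ennreal u \<partial>N) + (\<integral>\<^sup>+x. ennreal t * indicator X x \<partial>N)"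
    by (rule nn_integral_add) (use assms in auto)
  also have "\<dots> = ennreal u * emeasure N (space N) + ennreal t * emeasure N X"
    using assms by (simp add: nn_integral_cmult_indicator)
  finally show ?thesis .
qed

locale furbi_model = furbi_exponent +
  fixes M :: "'w measure"
    and \<mu>1 \<mu>2 :: "'w \<Rightarrow> ('a::polish_space \<times> 'a) measure"
    and G0 :: "('a \<times> 'a) measure"
    and C D :: "('a \<times> 'a) set"
  assumes base: "furbi_base G0"
    and crv: "furbi_crv M \<mu>1 \<mu>2 \<rho> \<theta> G0"
    and C: "C \<in> sets borel" and D: "D \<in> sets borel"
    and disjoint: "C \<inter> D = {}"
begin

lemma prob_space_M: "prob_space M"
  using crv by (simp add: furbi_crv_def)

lemma prob_space_G0: "prob_space G0"
  using base by (simp add: furbi_base_def)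

lemma sets_G0: "sets G0 = sets borel"
  using base by (simp add: furbi_base_def)

lemma sets_mu: "\<omega> \<in> space M \<Longrightarrow> sets (\<mu>1 \<omega>) = sets borel \<and> sets (\<mu>2 \<omega>) = sets borel"
  using crv by (simp add: furbi_crv_def)

lemma borel_measurable_emeasure_mu1[measurable]:
  "X \<in> sets borel \<Longrightarrow> (\<lambda>\<omega>. emeasure (\<mu>1 \<omega>) X) \<in> borel_measurable M"
  using crv by (simp add: furbi_crv_def)

lemma borel_measurable_emeasure_mu2[measurable]:
  "X \<in> sets borel \<Longrightarrow> (\<lambda>\<omega>. emeasure (\<mu>2 \<omega>) X) \<in> borel_measurable M"
  using crv by (simp add: furbi_crv_def)

lemma
  assumes "0 \<le> u1" "0 \<le> u2" "0 \<le> t1" "0 \<le> t2"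
  shows integrable_levy_exp_indicators:
      "integrable G0 (\<lambda>x. levy_exp (u1 + t1 * indicator C x) (u2 + t2 * indicator D x))"
    and integral_levy_exp_indicators:
      "(\<integral>x. levy_exp (u1 + t1 * indicator C x) (u2 + t2 * indicator D x) \<partial>G0)
        = levy_exp u1 u2 + measure G0 C * (levy_exp (u1 + t1) u2 - levy_exp u1 u2)
          + measure G0 D * (levy_exp u1 (u2 + t2) - levy_exp u1 u2)"
proof -
  interpret G: prob_space G0 by (rule prob_space_G0)
  define kC where "kC = levy_exp (u1 + t1) u2 - levy_exp u1 u2"
  define kD where "kD = levy_exp u1 (u2 + t2) - levy_exp u1 u2"
  have levy_exp_eq: "levy_exp (u1 + t1 * indicator C x) (u2 + t2 * indicator D x)
      = levy_exp u1 u2 + kC * indicator C x + kD * indicator D x" for x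
    using disjoint by (cases "x \<in> C"; cases "x \<in> D") (auto simp: kC_def kD_def)
  have integrable: "integrable G0 (\<lambda>x. levy_exp u1 u2 + kC * indicator C x + kD * indicator D x)"
    using C D sets_G0
    by (intro Bochner_Integration.integrable_add Bochner_Integration.integrable_mult_right
        G.integrable_const integrable_real_indicator) (auto simp: less_top[symmetric])
  then show "integrable G0 (\<lambda>x. levy_exp (u1 + t1 * indicator C x) (u2 + t2 * indicator D x))"
    by (simp only: levy_exp_eq)
  have "(\<integral>x. levy_exp u1 u2 + kC * indicator C x + kD * indicator D x \<partial>G0)
      = levy_exp u1 u2 + kC * measure G0 C + kD * measure G0 D"
    using integrable C D sets_G0 G.prob_space
    by (subst Bochner_Integration.integral_add, (auto simp: less_top[symmetric])[2])+
       (simp add: less_top[symmetric] sets_eq_imp_space_eq)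
  then show "(\<integral>x. levy_exp (u1 + t1 * indicator C x) (u2 + t2 * indicator D x) \<partial>G0)
      = levy_exp u1 u2 + measure G0 C * kC + measure G0 D * kD"
    by (simp only: levy_exp_eq ac_simps)
qed

lemma laplace_functional_indicators:
  assumes "0 \<le> u1" "0 \<le> u2" "0 \<le> t1" "0 \<le> t2"
  shows "(\<integral>\<omega>. enexp (ennreal u1 * emeasure (\<mu>1 \<omega>) UNIV + ennreal t1 * emeasure (\<mu>1 \<omega>) C
            + (ennreal u2 * emeasure (\<mu>2 \<omega>) UNIV + ennreal t2 * emeasure (\<mu>2 \<omega>) D)) \<partial>M)
    = exp (- (\<theta> * (levy_exp u1 u2 + measure G0 C * (levy_exp (u1 + t1) u2 - levy_exp u1 u2)
                   + measure G0 D * (levy_exp u1 (u2 + t2) - levy_exp u1 u2))))"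
    (is "_ = exp (- (\<theta> * ?K))")
proof -
  define f1 where "f1 x = u1 + t1 * indicator C x" for x :: "'a \<times> 'a"
  define f2 where "f2 x = u2 + t2 * indicator D x" for x :: "'a \<times> 'a"
  have f_nonneg: "0 \<le> f1 x" "0 \<le> f2 x" for x
    using assms by (simp_all add: f1_def f2_def)
  have lhs: "enexp ((\<integral>\<^sup>+ x. ennreal (f1 x) \<partial>(\<mu>1 \<omega>)) + (\<integral>\<^sup>+ x. ennreal (f2 x) \<partial>(\<mu>2 \<omega>)))
      = enexp (ennreal u1 * emeasure (\<mu>1 \<omega>) UNIV + ennreal t1 * emeasure (\<mu>1 \<omega>) C
          + (ennreal u2 * emeasure (\<mu>2 \<omega>) UNIV + ennreal t2 * emeasure (\<mu>2 \<omega>) D))"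
    if "\<omega> \<in> space M" for \<omega>
  proof -
    have "space (\<mu>1 \<omega>) = UNIV" "space (\<mu>2 \<omega>) = UNIV"
      using sets_mu[OF that] sets_eq_imp_space_eq[of _ borel] by auto
    then show ?thesis
      unfolding f1_def f2_def
      by (subst (1 2) nn_integral_const_plus_indicator) (use sets_mu[OF that] C D assms in auto)
  qed
  have "(\<integral>\<^sup>+ x. (\<integral>\<^sup>+ s. ennreal (1 - exp (- (fst s * f1 x + snd s * f2 x))) \<partial>\<rho>) \<partial>G0)
      = (\<integral>\<^sup>+ x. ennreal (levy_exp (f1 x) (f2 x)) \<partial>G0)"
    using nn_integral_one_minus_exp[OF f_nonneg] by simp
  also have "\<dots> = ennreal ?K"
    unfolding f1_def f2_def
    using integrable_levy_exp_indicators[OF assms] integral_levy_exp_indicators[OF assms]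
      levy_exp_nonneg f_nonneg[unfolded f1_def f2_def]
    by (subst nn_integral_eq_integral) auto
  finally have rhs: "(\<integral>\<^sup>+ x. (\<integral>\<^sup>+ s. ennreal (1 - exp (- (fst s * f1 x + snd s * f2 x))) \<partial>\<rho>) \<partial>G0)
      = ennreal ?K" .
  have K_nonneg: "0 \<le> ?K"
    unfolding integral_levy_exp_indicators[OF assms, symmetric]
    using levy_exp_nonneg f_nonneg[unfolded f1_def f2_def] by (intro Bochner_Integration.integral_nonneg) auto
  have "f1 \<in> borel_measurable borel" "f2 \<in> borel_measurable borel"
    unfolding f1_def f2_def using C D by measurable
  then have laplace: "(\<integral>\<omega>. enexp ((\<integral>\<^sup>+ x. ennreal (f1 x) \<partial>(\<mu>1 \<omega>)) + (\<integral>\<^sup>+ x. ennreal (f2 x) \<partial>(\<mu>2 \<omega>))) \<partial>M)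
      = enexp (ennreal \<theta> * (\<integral>\<^sup>+ x. (\<integral>\<^sup>+ s. ennreal (1 - exp (- (fst s * f1 x + snd s * f2 x))) \<partial>\<rho>) \<partial>G0))"
    using crv f_nonneg unfolding furbi_crv_def by blast
  have "(\<integral>\<omega>. enexp (ennreal u1 * emeasure (\<mu>1 \<omega>) UNIV + ennreal t1 * emeasure (\<mu>1 \<omega>) C
            + (ennreal u2 * emeasure (\<mu>2 \<omega>) UNIV + ennreal t2 * emeasure (\<mu>2 \<omega>) D)) \<partial>M)
      = (\<integral>\<omega>. enexp ((\<integral>\<^sup>+ x. ennreal (f1 x) \<partial>(\<mu>1 \<omega>)) + (\<integral>\<^sup>+ x. ennreal (f2 x) \<partial>(\<mu>2 \<omega>))) \<partial>M)"
    by (rule Bochner_Integration.integral_cong[OF refl]) (simp add: lhs)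
  also have "\<dots> = enexp (ennreal (\<theta> * ?K))"
    unfolding laplace rhs using theta_pos K_nonneg by (simp add: ennreal_mult)
  also have "\<dots> = exp (- (\<theta> * ?K))"
    using theta_pos K_nonneg by (simp add: enexp_ennreal)
  finally show ?thesis .
qed

definition laplace_weight :: "real \<Rightarrow> real \<Rightarrow> 'w \<Rightarrow> real" where
  "laplace_weight u1 u2 \<omega> = enexp (ennreal u1 * emeasure (\<mu>1 \<omega>) UNIV + ennreal u2 * emeasure (\<mu>2 \<omega>) UNIV)"

definition laplace_C :: "real \<Rightarrow> 'w \<Rightarrow> real" where
  "laplace_C t \<omega> = enexp (ennreal t * emeasure (\<mu>1 \<omega>) C)"

definition laplace_D :: "real \<Rightarrow> 'w \<Rightarrow> real" where
  "laplace_D t \<omega> = enexp (ennreal t * emeasure (\<mu>2 \<omega>) D)"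

lemma borel_measurable_laplace_weight[measurable]: "laplace_weight u1 u2 \<in> borel_measurable M"
  unfolding laplace_weight_def by measurable

lemma borel_measurable_laplace_C[measurable]: "laplace_C t \<in> borel_measurable M"
  unfolding laplace_C_def using C by measurable

lemma borel_measurable_laplace_D[measurable]: "laplace_D t \<in> borel_measurable M"
  unfolding laplace_D_def using D by measurable

lemma laplace_C_0[simp]: "laplace_C 0 \<omega> = 1" and laplace_D_0[simp]: "laplace_D 0 \<omega> = 1"
  by (simp_all add: laplace_C_def laplace_D_def)

lemma integrable_laplace_product:
  "integrable M (\<lambda>\<omega>. laplace_weight u1 u2 \<omega> * laplace_C t1 \<omega> * laplace_D t2 \<omega>)"
proof -
  interpret prob_space M by (rule prob_space_M)
  show ?thesis
  proof (rule integrable_const_bound[where B=1])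
    show "AE \<omega> in M. norm (laplace_weight u1 u2 \<omega> * laplace_C t1 \<omega> * laplace_D t2 \<omega>) \<le> 1"
      using enexp_nonneg enexp_le_1
      by (intro AE_I2) (auto simp: laplace_weight_def laplace_C_def laplace_D_def abs_mult
          intro!: mult_le_one)
  qed measurable
qed

lemma expectation_laplace_product:
  assumes "0 \<le> u1" "0 \<le> u2" "0 \<le> t1" "0 \<le> t2"
  shows "(\<integral>\<omega>. laplace_weight u1 u2 \<omega> * laplace_C t1 \<omega> * laplace_D t2 \<omega> \<partial>M)
    = exp (- (\<theta> * levy_exp u1 u2))
      * exp (- (\<theta> * measure G0 C * (levy_exp (u1 + t1) u2 - levy_exp u1 u2)))
      * exp (- (\<theta> * measure G0 D * (levy_exp u1 (u2 + t2) - levy_exp u1 u2)))"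
proof -
  have "(\<integral>\<omega>. laplace_weight u1 u2 \<omega> * laplace_C t1 \<omega> * laplace_D t2 \<omega> \<partial>M)
      = (\<integral>\<omega>. enexp (ennreal u1 * emeasure (\<mu>1 \<omega>) UNIV + ennreal t1 * emeasure (\<mu>1 \<omega>) C
            + (ennreal u2 * emeasure (\<mu>2 \<omega>) UNIV + ennreal t2 * emeasure (\<mu>2 \<omega>) D)) \<partial>M)"
    by (intro Bochner_Integration.integral_cong refl)
       (simp add: laplace_weight_def laplace_C_def laplace_D_def enexp_add[symmetric] ac_simps)
  also have "\<dots> = exp (- (\<theta> * (levy_exp u1 u2 + measure G0 C * (levy_exp (u1 + t1) u2 - levy_exp u1 u2)
                   + measure G0 D * (levy_exp u1 (u2 + t2) - levy_exp u1 u2))))"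
    by (rule laplace_functional_indicators[OF assms])
  finally show ?thesis by (simp add: exp_add[symmetric] algebra_simps)
qed

lemma expectation_laplace_differences:
  assumes "0 \<le> u1" "0 \<le> u2" "0 \<le> t"
  shows "(\<integral>\<omega>. laplace_weight u1 u2 \<omega> * (1 - laplace_C t \<omega>) * (1 - laplace_D t \<omega>) \<partial>M)
    = exp (- (\<theta> * levy_exp u1 u2))
      * (1 - exp (- (\<theta> * measure G0 C * (levy_exp (u1 + t) u2 - levy_exp u1 u2))))
      * (1 - exp (- (\<theta> * measure G0 D * (levy_exp u1 (u2 + t) - levy_exp u1 u2))))"
proof -
  let ?g = "\<lambda>a b \<omega>. laplace_weight u1 u2 \<omega> * laplace_C a \<omega> * laplace_D b \<omega>"
  have "(\<integral>\<omega>. laplace_weight u1 u2 \<omega> * (1 - laplace_C t \<omega>) * (1 - laplace_D t \<omega>) \<partial>M)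
      = (\<integral>\<omega>. ?g 0 0 \<omega> - ?g t 0 \<omega> - ?g 0 t \<omega> + ?g t t \<omega> \<partial>M)"
    by (intro Bochner_Integration.integral_cong refl) (simp add: algebra_simps)
  also have "\<dots> = (\<integral>\<omega>. ?g 0 0 \<omega> \<partial>M) - (\<integral>\<omega>. ?g t 0 \<omega> \<partial>M) - (\<integral>\<omega>. ?g 0 t \<omega> \<partial>M)
      + (\<integral>\<omega>. ?g t t \<omega> \<partial>M)"
    using integrable_laplace_product by (simp del: laplace_C_0 laplace_D_0)
  also have "\<dots> = exp (- (\<theta> * levy_exp u1 u2))
      * (1 - exp (- (\<theta> * measure G0 C * (levy_exp (u1 + t) u2 - levy_exp u1 u2))))
      * (1 - exp (- (\<theta> * measure G0 D * (levy_exp u1 (u2 + t) - levy_exp u1 u2))))"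
    unfolding expectation_laplace_product[OF assms(1,2) order_refl order_refl]
      expectation_laplace_product[OF assms(1,2,3) order_refl]
      expectation_laplace_product[OF assms(1,2) order_refl assms(3)]
      expectation_laplace_product[OF assms(1,2,3,3)]
    by (simp add: algebra_simps)
  finally show ?thesis .
qed

lemma nn_integral_laplace_weight_enexp_quotient:
  assumes "0 \<le> u1" "0 \<le> u2"
  shows "(\<integral>\<^sup>+\<omega>. ennreal (laplace_weight u1 u2 \<omega> * enexp_quotient n (emeasure (\<mu>1 \<omega>) C)
      * enexp_quotient n (emeasure (\<mu>2 \<omega>) D)) \<partial>M)
    = ennreal (exp (- (\<theta> * levy_exp u1 u2))
      * ((1 - exp (- (\<theta> * measure G0 C * (levy_exp (u1 + dyadic n) u2 - levy_exp u1 u2)))) / dyadic n)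
      * ((1 - exp (- (\<theta> * measure G0 D * (levy_exp u1 (u2 + dyadic n) - levy_exp u1 u2)))) / dyadic n))"
proof -
  interpret prob_space M by (rule prob_space_M)
  let ?q = "\<lambda>\<omega>. laplace_weight u1 u2 \<omega> * enexp_quotient n (emeasure (\<mu>1 \<omega>) C)
      * enexp_quotient n (emeasure (\<mu>2 \<omega>) D)"
  have q_nonneg: "0 \<le> ?q \<omega>" for \<omega>
    using enexp_nonneg enexp_quotient_nonneg by (simp add: laplace_weight_def)
  have q_le: "?q \<omega> \<le> 1 * (1 / dyadic n) * (1 / dyadic n)" for \<omega>
    unfolding laplace_weight_def
    using enexp_nonneg enexp_le_1 enexp_quotient_nonneg enexp_quotient_le dyadic_pos[of n]
    by (intro mult_mono) auto
  have "integrable M ?q"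
  proof (rule integrable_const_bound[where B="1 * (1 / dyadic n) * (1 / dyadic n)"])
    show "AE \<omega> in M. norm (?q \<omega>) \<le> 1 * (1 / dyadic n) * (1 / dyadic n)"
      using q_nonneg q_le by (intro AE_I2) (simp only: real_norm_def abs_of_nonneg)
    show "?q \<in> borel_measurable M"
      unfolding enexp_quotient_def using C D by measurable
  qed
  then have "(\<integral>\<^sup>+\<omega>. ennreal (?q \<omega>) \<partial>M) = ennreal (\<integral>\<omega>. ?q \<omega> \<partial>M)"
    by (rule nn_integral_eq_integral) (simp add: q_nonneg)
  also have "(\<integral>\<omega>. ?q \<omega> \<partial>M) = (\<integral>\<omega>. laplace_weight u1 u2 \<omega> * (1 - laplace_C (dyadic n) \<omega>)
      * (1 - laplace_D (dyadic n) \<omega>) \<partial>M) / (dyadic n * dyadic n)"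
    by (simp add: enexp_quotient_def laplace_C_def laplace_D_def)
  finally show ?thesis
    using expectation_laplace_differences[OF assms less_imp_le[OF dyadic_pos[of n]]] by simp
qed

lemma nn_integral_laplace_weight_mu1_C_mu2_D:
  assumes "0 < u1" "0 < u2"
  shows "(\<integral>\<^sup>+\<omega>. ennreal (laplace_weight u1 u2 \<omega>) * emeasure (\<mu>1 \<omega>) C * emeasure (\<mu>2 \<omega>) D \<partial>M)
    = ennreal (measure G0 C * measure G0 D * prod_density u1 u2)"
proof -
  have weight_nonneg: "0 \<le> laplace_weight u1 u2 \<omega>" for \<omega>
    by (simp add: laplace_weight_def enexp_nonneg)
  have "(\<lambda>n. \<integral>\<^sup>+\<omega>. ennreal (laplace_weight u1 u2 \<omega> * enexp_quotient n (emeasure (\<mu>1 \<omega>) C)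
        * enexp_quotient n (emeasure (\<mu>2 \<omega>) D)) \<partial>M)
      \<longlonglongrightarrow> (\<integral>\<^sup>+\<omega>. ennreal (laplace_weight u1 u2 \<omega>) * emeasure (\<mu>1 \<omega>) C * emeasure (\<mu>2 \<omega>) D \<partial>M)"
  proof (rule nn_integral_LIMSEQ)
    show "incseq (\<lambda>n \<omega>. ennreal (laplace_weight u1 u2 \<omega> * enexp_quotient n (emeasure (\<mu>1 \<omega>) C)
        * enexp_quotient n (emeasure (\<mu>2 \<omega>) D)))"
      using incseq_enexp_quotient_product[OF weight_nonneg] by (auto simp: incseq_def le_fun_def)
  qed (use weight_nonneg LIMSEQ_enexp_quotient_product C D in \<open>auto simp: enexp_quotient_def\<close>)
  moreover have "(\<lambda>n. \<integral>\<^sup>+\<omega>. ennreal (laplace_weight u1 u2 \<omega> * enexp_quotient n (emeasure (\<mu>1 \<omega>) C)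
        * enexp_quotient n (emeasure (\<mu>2 \<omega>) D)) \<partial>M)
      \<longlonglongrightarrow> ennreal (exp (- (\<theta> * levy_exp u1 u2))
        * (\<theta> * measure G0 C * levy_exp_da u1 u2) * (\<theta> * measure G0 D * levy_exp_db u1 u2))"
    unfolding nn_integral_laplace_weight_enexp_quotient[OF less_imp_le[OF assms(1)] less_imp_le[OF assms(2)]]
    using assms
    by (intro tendsto_ennrealI tendsto_mult tendsto_const
        LIMSEQ_dyadic_quotient_levy_exp_fst LIMSEQ_dyadic_quotient_levy_exp_snd) auto
  ultimately have "(\<integral>\<^sup>+\<omega>. ennreal (laplace_weight u1 u2 \<omega>) * emeasure (\<mu>1 \<omega>) C * emeasure (\<mu>2 \<omega>) D \<partial>M)
      = ennreal (exp (- (\<theta> * levy_exp u1 u2))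
        * (\<theta> * measure G0 C * levy_exp_da u1 u2) * (\<theta> * measure G0 D * levy_exp_db u1 u2))"
    by (rule LIMSEQ_unique)
  then show ?thesis by (simp add: prod_density_def ac_simps)
qed

end

theorem lemmaS3:
  fixes M :: "'w measure"
    and \<mu>1 \<mu>2 :: "'w \<Rightarrow> ('a::polish_space \<times> 'a) measure"
    and \<rho> :: "(real \<times> real) measure"
    and \<theta> :: real
    and G0 :: "('a \<times> 'a) measure"
    and C D :: "('a \<times> 'a) set"
  assumes "0 < \<theta>"
    and "furbi_base G0"
    and "furbi_levy \<rho>"
    and "furbi_crv M \<mu>1 \<mu>2 \<rho> \<theta> G0"
    and "C \<in> sets borel" and "D \<in> sets borel" and "C \<inter> D = {}"
  shows "(\<integral>\<^sup>+ u \<in> {0<..}\<times>{0<..}.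
            (\<integral>\<^sup>+ \<omega>. ennreal (enexp (ennreal (fst u) * emeasure (\<mu>1 \<omega>) UNIV
                                       + ennreal (snd u) * emeasure (\<mu>2 \<omega>) UNIV))
                     * emeasure (\<mu>1 \<omega>) C * emeasure (\<mu>2 \<omega>) D \<partial>M) \<partial>lborel)
         = ennreal (measure G0 C * measure G0 D * (1 - furbi_delta \<rho> \<theta>))"
proof -
  interpret furbi_model \<rho> \<theta> M \<mu>1 \<mu>2 G0 C D
    by unfold_locales (use assms in auto)
  let ?P = "\<lambda>u. ennreal (prod_density (fst u) (snd u)) * indicator ({0<..} \<times> {0<..}) u"
  have "(\<integral>\<^sup>+ u \<in> {0<..}\<times>{0<..}.
            (\<integral>\<^sup>+ \<omega>. ennreal (enexp (ennreal (fst u) * emeasure (\<mu>1 \<omega>) UNIV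
                                       + ennreal (snd u) * emeasure (\<mu>2 \<omega>) UNIV))
                     * emeasure (\<mu>1 \<omega>) C * emeasure (\<mu>2 \<omega>) D \<partial>M) \<partial>lborel)
      = (\<integral>\<^sup>+ u. ennreal (measure G0 C * measure G0 D) * ?P u \<partial>lborel)"
    using nn_integral_laplace_weight_mu1_C_mu2_D prod_density_nonneg
    by (intro nn_integral_cong)
       (auto simp: laplace_weight_def ennreal_mult mult_ac split: split_indicator)
  also have "\<dots> = ennreal (measure G0 C * measure G0 D) * (\<integral>\<^sup>+ u. ?P u \<partial>lborel)"
    by (rule nn_integral_cmult) (simp add: measurable_lborel1)
  also have "\<dots> = ennreal (measure G0 C * measure G0 D * (1 - furbi_delta \<rho> \<theta>))"
    using nn_integral_prod_density furbi_delta_le_1 by (simp add: ennreal_mult)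
  finally show ?thesis .
qed

end
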